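(* Let $\mathcal S=(\mathcal P,\mathcal L)$ be a linear space with $v$ points and constant line size $k$, $2<k<v$; let $G\le\mathrm{Aut}(\mathcal S)$ be transitive on lines, and let $\mathfrak C$ be a non-trivial $G$-invariant partition of $\mathcal P$ with $d$ classes of size $c$ which is $G$-normal and minimal. Let $K:=G_{(\mathfrak C)}$, $S:=\mathrm{Soc}(K)$, $X:=C_G(K)$ and $Y:=C_G(S)$. Then: (a) either (i) $Y\cap K=1$ and $S$ is non-abelian, or (ii) $Y\cap K=S$ and $S$ is elementary abelian; (b) either (i) $X\cap K=1$, or (ii) $X\cap K=K=S$ and $S$ is elementary abelian; (c) if in addition $\mathfrak C$ is maximal, and there is a non-trivial normal subgroup $N$ of $G$ which is intransitive on $\mathcal P$ and satisfies $N\cap S=1$, then there is a second $G$-normal partition $\mathfrak C'$ of $\mathcal P$ with $c$ classes of size $d$ such that $|C\cap C'|=1$ for all $C\in\mathfrak C$, $C'\in\mathfrak C'$.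
   Context: A linear space: a finite set $\mathcal P$ of points and a set $\mathcal L$ of subsets (lines) such that any two distinct points lie on exactly one line and each line has at least two points. $G_{(\mathfrak C)}$ is the kernel of the action of $G$ on $\mathfrak C$. A $G$-invariant partition is $G$-normal if this kernel is transitive on each class; minimal (resp. maximal) if no non-trivial $G$-invariant partition strictly refines it (resp. is strictly coarser than it). $\mathrm{Soc}$ denotes the socle and $C_G(\cdot)$ the centraliser in $G$. *)

theory Defs
  imports "HOL-Algebra.Algebra"
begin

definition linear_space :: "'a set \<Rightarrow> 'a set set \<Rightarrow> bool" where
  "linear_space P L \<longleftrightarrow> finite P \<and> (\<forall>l\<in>L. l \<subseteq> P \<and> 2 \<le> card l) \<and>
     (\<forall>x\<in>P. \<forall>y\<in>P. x \<noteq> y \<longrightarrow> (\<exists>!l. l \<in> L \<and> x \<in> l \<and> y \<in> l))"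

text \<open>Permutation groups on P: subgroups of the group of (extensional) bijections of P.\<close>

abbreviation Sym :: "'a set \<Rightarrow> ('a \<Rightarrow> 'a) monoid" where
  "Sym P \<equiv> BijGroup P"

abbreviation subgrp :: "'a set \<Rightarrow> ('a \<Rightarrow> 'a) set \<Rightarrow> ('a \<Rightarrow> 'a) monoid" where
  "subgrp P H \<equiv> (BijGroup P)\<lparr>carrier := H\<rparr>"

definition aut_group :: "'a set \<Rightarrow> 'a set set \<Rightarrow> ('a \<Rightarrow> 'a) set \<Rightarrow> bool" where
  "aut_group P L G \<longleftrightarrow> subgroup G (Sym P) \<and> (\<forall>g\<in>G. (\<lambda>l. g ` l) ` L = L)"

definition line_transitive :: "'a set set \<Rightarrow> ('a \<Rightarrow> 'a) set \<Rightarrow> bool" where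
  "line_transitive L G \<longleftrightarrow> (\<forall>l\<in>L. \<forall>m\<in>L. \<exists>g\<in>G. g ` l = m)"

definition is_partition :: "'a set \<Rightarrow> 'a set set \<Rightarrow> bool" where
  "is_partition P Q \<longleftrightarrow> (\<forall>A\<in>Q. A \<noteq> {}) \<and> \<Union>Q = P \<and>
     (\<forall>A\<in>Q. \<forall>B\<in>Q. A \<noteq> B \<longrightarrow> A \<inter> B = {})"

definition nontrivial_partition :: "'a set \<Rightarrow> 'a set set \<Rightarrow> bool" where
  "nontrivial_partition P Q \<longleftrightarrow> is_partition P Q \<and> Q \<noteq> {P} \<and> Q \<noteq> (\<lambda>x. {x}) ` P"

definition invariant_partition :: "'a set \<Rightarrow> ('a \<Rightarrow> 'a) set \<Rightarrow> 'a set set \<Rightarrow> bool" where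
  "invariant_partition P G Q \<longleftrightarrow> is_partition P Q \<and> (\<forall>g\<in>G. \<forall>A\<in>Q. g ` A \<in> Q)"

definition kernel_on :: "('a \<Rightarrow> 'a) set \<Rightarrow> 'a set set \<Rightarrow> ('a \<Rightarrow> 'a) set" where
  "kernel_on G Q = {g\<in>G. \<forall>A\<in>Q. g ` A = A}"

definition normal_partition :: "'a set \<Rightarrow> ('a \<Rightarrow> 'a) set \<Rightarrow> 'a set set \<Rightarrow> bool" where
  "normal_partition P G Q \<longleftrightarrow> invariant_partition P G Q \<and>
     (\<forall>A\<in>Q. \<forall>x\<in>A. \<forall>y\<in>A. \<exists>g\<in>kernel_on G Q. g x = y)"

definition refines :: "'a set set \<Rightarrow> 'a set set \<Rightarrow> bool" where
  "refines D Q \<longleftrightarrow> (\<forall>A\<in>D. \<exists>B\<in>Q. A \<subseteq> B)"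

definition minimal_partition :: "'a set \<Rightarrow> ('a \<Rightarrow> 'a) set \<Rightarrow> 'a set set \<Rightarrow> bool" where
  "minimal_partition P G Q \<longleftrightarrow> invariant_partition P G Q \<and>
     \<not> (\<exists>D. invariant_partition P G D \<and> nontrivial_partition P D \<and> refines D Q \<and> D \<noteq> Q)"

definition maximal_partition :: "'a set \<Rightarrow> ('a \<Rightarrow> 'a) set \<Rightarrow> 'a set set \<Rightarrow> bool" where
  "maximal_partition P G Q \<longleftrightarrow> invariant_partition P G Q \<and>
     \<not> (\<exists>D. invariant_partition P G D \<and> nontrivial_partition P D \<and> refines Q D \<and> D \<noteq> Q)"

definition transitive_on :: "('a \<Rightarrow> 'a) set \<Rightarrow> 'a set \<Rightarrow> bool" where
  "transitive_on H A \<longleftrightarrow> (\<forall>x\<in>A. \<forall>y\<in>A. \<exists>h\<in>H. h x = y)"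

definition minimal_normal :: "'a set \<Rightarrow> ('a \<Rightarrow> 'a) set \<Rightarrow> ('a \<Rightarrow> 'a) set \<Rightarrow> bool" where
  "minimal_normal P H M \<longleftrightarrow> M \<lhd> subgrp P H \<and> M \<noteq> {\<one>\<^bsub>Sym P\<^esub>} \<and>
     \<not> (\<exists>M'. M' \<lhd> subgrp P H \<and> M' \<noteq> {\<one>\<^bsub>Sym P\<^esub>} \<and> M' \<subset> M)"

definition socle :: "'a set \<Rightarrow> ('a \<Rightarrow> 'a) set \<Rightarrow> ('a \<Rightarrow> 'a) set" where
  "socle P H = generate (Sym P) (\<Union>{M. minimal_normal P H M})"

definition centraliser :: "'a set \<Rightarrow> ('a \<Rightarrow> 'a) set \<Rightarrow> ('a \<Rightarrow> 'a) set \<Rightarrow> ('a \<Rightarrow> 'a) set" where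
  "centraliser P G H = {g\<in>G. \<forall>h\<in>H. g \<otimes>\<^bsub>Sym P\<^esub> h = h \<otimes>\<^bsub>Sym P\<^esub> g}"

definition abelian_set :: "'a set \<Rightarrow> ('a \<Rightarrow> 'a) set \<Rightarrow> bool" where
  "abelian_set P H \<longleftrightarrow> (\<forall>x\<in>H. \<forall>y\<in>H. x \<otimes>\<^bsub>Sym P\<^esub> y = y \<otimes>\<^bsub>Sym P\<^esub> x)"

definition elementary_abelian :: "'a set \<Rightarrow> ('a \<Rightarrow> 'a) set \<Rightarrow> bool" where
  "elementary_abelian P H \<longleftrightarrow> abelian_set P H \<and>
     (\<exists>p::nat. Factorial_Ring.prime p \<and> (\<forall>x\<in>H. x [^]\<^bsub>Sym P\<^esub> p = \<one>\<^bsub>Sym P\<^esub>))"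

end

(* The kernel K of G on the classes is transitive on each class, and by minimality of the block
   system every normal subgroup of G inside K is trivial or transitive on every class: its orbits
   form a G-invariant partition refining the classes.  An abelian group transitive on a class is
   regular there, so whatever commutes with it agrees on that class with one of its elements.
   Applied to Z(K), resp. Z(S), which are nontrivial as soon as C_K(K), resp. C_K(S), is, this
   makes K, resp. S and C_K(S), abelian; taking p-torsion gives exponent p.  The inclusion C_K(S) <= S is complete reducibility: the product over the classes
   of the restrictions of S is generated by minimal K-invariant subgroups, hence so is every
   K-invariant subgroup of it.
   For (c), N meets K trivially, so N and K commute and maximality makes NK transitive; hence N
   meets every class, while minimality forces every class to meet every N-orbit in one point.
   The N-orbits are the required second partition. *)

theory Submission
  imports Defs
begin

section \<open>Invariant subgroups and the socle\<close>

text \<open>\<open>minimal_invariant Gr K K\<close> singles out the minimal normal subgroups of K and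
  \<open>invariant_socle Gr K K\<close> is the socle of K (see \<open>socle_eq_invariant_socle\<close>); the set W
  containing the minimal subgroups is a parameter for the complete reducibility argument.\<close>

definition invariant_subgroup :: "('g, 'b) monoid_scheme \<Rightarrow> 'g set \<Rightarrow> 'g set \<Rightarrow> bool" where
  "invariant_subgroup Gr K A \<longleftrightarrow>
     subgroup A Gr \<and> (\<forall>k\<in>K. \<forall>a\<in>A. k \<otimes>\<^bsub>Gr\<^esub> a \<otimes>\<^bsub>Gr\<^esub> inv\<^bsub>Gr\<^esub> k \<in> A)"

definition minimal_invariant :: "('g, 'b) monoid_scheme \<Rightarrow> 'g set \<Rightarrow> 'g set \<Rightarrow> 'g set \<Rightarrow> bool" where
  "minimal_invariant Gr K W T \<longleftrightarrow> invariant_subgroup Gr K T \<and> T \<subseteq> W \<and> T \<noteq> {\<one>\<^bsub>Gr\<^esub>} \<and>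
     (\<forall>T'. invariant_subgroup Gr K T' \<longrightarrow> T' \<noteq> {\<one>\<^bsub>Gr\<^esub>} \<longrightarrow> T' \<subseteq> T \<longrightarrow> T' = T)"

definition invariant_socle :: "('g, 'b) monoid_scheme \<Rightarrow> 'g set \<Rightarrow> 'g set \<Rightarrow> 'g set" where
  "invariant_socle Gr K W = generate Gr (\<Union>{T. minimal_invariant Gr K W T})"

context group begin

lemma invariant_subgroupD:
  assumes "invariant_subgroup G K A"
  shows "subgroup A G" "A \<subseteq> carrier G" "\<one> \<in> A"
    and "k \<in> K \<Longrightarrow> a \<in> A \<Longrightarrow> k \<otimes> a \<otimes> inv k \<in> A"
proof -
  show A: "subgroup A G" using assms unfolding invariant_subgroup_def by blast
  show "A \<subseteq> carrier G" using subgroup.subset[OF A] .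
  show "\<one> \<in> A" using subgroup.one_closed[OF A] .
  show "k \<in> K \<Longrightarrow> a \<in> A \<Longrightarrow> k \<otimes> a \<otimes> inv k \<in> A"
    using assms unfolding invariant_subgroup_def by blast
qed

lemma minimal_invariantD:
  assumes "minimal_invariant G K W T"
  shows "invariant_subgroup G K T" "T \<subseteq> W" "\<exists>t\<in>T. t \<noteq> \<one>"
proof -
  show T: "invariant_subgroup G K T" using assms unfolding minimal_invariant_def by blast
  show "T \<subseteq> W" using assms unfolding minimal_invariant_def by blast
  have "T \<noteq> {\<one>}" using assms unfolding minimal_invariant_def by blast
  then show "\<exists>t\<in>T. t \<noteq> \<one>" using invariant_subgroupD(3)[OF T] by blast
qed

lemma minimal_invariant_mono:
  "minimal_invariant G K W T \<Longrightarrow> W \<subseteq> W' \<Longrightarrow> minimal_invariant G K W' T"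
  unfolding minimal_invariant_def by blast

lemma invariant_subgroup_trivial: "K \<subseteq> carrier G \<Longrightarrow> invariant_subgroup G K {\<one>}"
  unfolding invariant_subgroup_def using triv_subgroup by force

lemma invariant_subgroup_Int:
  "invariant_subgroup G K A \<Longrightarrow> invariant_subgroup G K B \<Longrightarrow> invariant_subgroup G K (A \<inter> B)"
  unfolding invariant_subgroup_def by (auto intro: subgroups_Inter_pair)

lemma invariant_subgroup_generate:
  assumes K: "K \<subseteq> carrier G" and H: "H \<subseteq> carrier G"
    and closed: "\<And>k h. k \<in> K \<Longrightarrow> h \<in> H \<Longrightarrow> k \<otimes> h \<otimes> inv k \<in> H"
  shows "invariant_subgroup G K (generate G H)"
  unfolding invariant_subgroup_def
proof (intro conjI ballI)
  show "subgroup (generate G H) G" using generate_is_subgroup[OF H] .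
  fix k h assume k: "k \<in> K" and h: "h \<in> generate G H"
  have kG: "k \<in> carrier G" using k K by auto
  from h show "k \<otimes> h \<otimes> inv k \<in> generate G H"
  proof (induct h rule: generate.induct)
    case one thus ?case using kG generate.one by auto
  next
    case (incl h) show ?case using generate.incl[OF closed[OF k incl]] .
  next
    case (inv h)
    hence "inv (k \<otimes> h \<otimes> inv k) = k \<otimes> inv h \<otimes> inv k"
      using kG H by (auto simp add: inv_mult_group m_assoc)
    thus ?case
      using generate_m_inv_closed[OF H generate.incl[OF closed[OF k inv]]] by simp
  next
    case (eng h1 h2)
    note in_carrier = eng(1,3)[THEN generate_in_carrier[OF H]]
    have "k \<otimes> (h1 \<otimes> h2) \<otimes> inv k = (k \<otimes> h1 \<otimes> inv k) \<otimes> (k \<otimes> h2 \<otimes> inv k)"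
      using in_carrier kG by (simp add: inv_solve_left m_assoc)
    thus ?case using generate.eng[OF eng(2,4)] by simp
  qed
qed

lemma minimal_invariant_exists:
  assumes fin: "finite (carrier G)" and W: "invariant_subgroup G K W" "W \<noteq> {\<one>}"
  shows "\<exists>T. minimal_invariant G K W T"
proof -
  let ?Q = "\<lambda>T. invariant_subgroup G K T \<and> T \<noteq> {\<one>} \<and> T \<subseteq> W"
  have "?Q W" using W by blast
  then obtain T where T: "?Q T" and least: "\<And>T'. ?Q T' \<Longrightarrow> card T \<le> card T'"
    using ex_has_least_nat[of ?Q W card] by blast
  have fin_T: "finite T" using finite_subset[OF invariant_subgroupD(2) fin] T by blast
  have "T' = T" if T': "invariant_subgroup G K T'" "T' \<noteq> {\<one>}" "T' \<subseteq> T" for T'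
  proof -
    have "card T \<le> card T'" using least[of T'] T' T by blast
    then have "card T' = card T" using card_mono[OF fin_T T'(3)] by linarith
    then show ?thesis using card_subset_eq[OF fin_T T'(3)] by blast
  qed
  then have "minimal_invariant G K W T" unfolding minimal_invariant_def using T by blast
  then show ?thesis ..
qed

lemma minimal_invariant_subset_socle:
  "minimal_invariant G K W T \<Longrightarrow> T \<subseteq> invariant_socle G K W"
  unfolding invariant_socle_def by (blast intro: generate.incl)

lemma invariant_socle_subset:
  assumes "subgroup W G" shows "invariant_socle G K W \<subseteq> W"
  unfolding invariant_socle_def
  by (rule generate_subgroup_incl[OF _ assms]) (auto simp: minimal_invariant_def)

lemma invariant_socle_mono:
  "W \<subseteq> W' \<Longrightarrow> invariant_socle G K W \<subseteq> invariant_socle G K W'"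
  unfolding invariant_socle_def by (intro mono_generate) (blast intro: minimal_invariant_mono)

lemma invariant_socle_invariant:
  assumes K: "K \<subseteq> carrier G" and W: "W \<subseteq> carrier G"
  shows "invariant_subgroup G K (invariant_socle G K W)"
  unfolding invariant_socle_def
proof (rule invariant_subgroup_generate[OF K])
  show "\<Union>{T. minimal_invariant G K W T} \<subseteq> carrier G"
    using W minimal_invariantD(2) by blast
  fix k h assume "k \<in> K" "h \<in> \<Union>{T. minimal_invariant G K W T}"
  then show "k \<otimes> h \<otimes> inv k \<in> \<Union>{T. minimal_invariant G K W T}"
    using minimal_invariantD(1) invariant_subgroupD(4) by blast
qed

lemma invariant_socle_nontrivial:
  assumes "finite (carrier G)" "invariant_subgroup G K W" "W \<noteq> {\<one>}"
  shows "invariant_socle G K W \<noteq> {\<one>}"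
proof -
  obtain T where T: "minimal_invariant G K W T" using minimal_invariant_exists[OF assms] ..
  then obtain t where "t \<in> T" "t \<noteq> \<one>" using minimal_invariantD(3) by blast
  then show ?thesis using minimal_invariant_subset_socle[OF T] by blast
qed

lemma inv_mult_cancel_left [simp]:
  "x \<in> carrier G \<Longrightarrow> z \<in> carrier G \<Longrightarrow> inv x \<otimes> (x \<otimes> z) = z"
  by (simp add: m_assoc[symmetric])

lemma mult_inv_cancel_left [simp]:
  "x \<in> carrier G \<Longrightarrow> z \<in> carrier G \<Longrightarrow> x \<otimes> (inv x \<otimes> z) = z"
  by (simp add: m_assoc[symmetric])

lemma conj_mult:
  "g \<in> carrier G \<Longrightarrow> a \<in> carrier G \<Longrightarrow> b \<in> carrier G \<Longrightarrow>
     g \<otimes> (a \<otimes> b) \<otimes> inv g = (g \<otimes> a \<otimes> inv g) \<otimes> (g \<otimes> b \<otimes> inv g)"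
  by (simp add: m_assoc)

lemma set_mult_memI: "a \<in> A \<Longrightarrow> b \<in> B \<Longrightarrow> a \<otimes> b \<in> A <#> B"
  unfolding set_mult_def by blast

lemma set_mult_memE:
  assumes "x \<in> A <#> B"
  obtains a b where "a \<in> A" "b \<in> B" "x = a \<otimes> b"
  using assms unfolding set_mult_def by blast

lemma subset_set_mult_left: "\<one> \<in> B \<Longrightarrow> A \<subseteq> carrier G \<Longrightarrow> A \<subseteq> A <#> B"
  using set_mult_memI[of _ A \<one> B] by fastforce

lemma subset_set_mult_right: "\<one> \<in> A \<Longrightarrow> B \<subseteq> carrier G \<Longrightarrow> B \<subseteq> A <#> B"
  using set_mult_memI[of \<one> A _ B] by fastforce

lemma commuting_set_mult_invariant:
  assumes A: "invariant_subgroup G K A" and B: "invariant_subgroup G K B"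
    and K: "K \<subseteq> carrier G"
    and comm: "\<And>a b. a \<in> A \<Longrightarrow> b \<in> B \<Longrightarrow> a \<otimes> b = b \<otimes> a"
  shows "invariant_subgroup G K (A <#> B)"
  unfolding invariant_subgroup_def
proof (intro conjI ballI)
  note A' = invariant_subgroupD[OF A] and B' = invariant_subgroupD[OF B]
  show "subgroup (A <#> B) G"
  proof (rule subgroupI)
    show "A <#> B \<subseteq> carrier G" using A'(2) B'(2) unfolding set_mult_def by fastforce
    show "A <#> B \<noteq> {}" using A'(3) B'(3) unfolding set_mult_def by blast
  next
    fix x assume "x \<in> A <#> B"
    then obtain a b where ab: "a \<in> A" "b \<in> B" "x = a \<otimes> b" by (rule set_mult_memE)
    have c: "a \<in> carrier G" "b \<in> carrier G" using ab A'(2) B'(2) by blast+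
    have i: "inv a \<in> A" "inv b \<in> B"
      using ab subgroup.m_inv_closed[OF A'(1)] subgroup.m_inv_closed[OF B'(1)] by blast+
    have "inv x = inv b \<otimes> inv a" using ab(3) c by (simp add: inv_mult_group)
    also have "\<dots> = inv a \<otimes> inv b" using comm[OF i] by (rule sym)
    finally show "inv x \<in> A <#> B" using set_mult_memI[OF i] by simp
  next
    fix x y assume "x \<in> A <#> B" "y \<in> A <#> B"
    then obtain a b a' b' where ab: "a \<in> A" "b \<in> B" "x = a \<otimes> b" "a' \<in> A" "b' \<in> B" "y = a' \<otimes> b'"
      by (metis set_mult_memE)
    have c: "a \<in> carrier G" "b \<in> carrier G" "a' \<in> carrier G" "b' \<in> carrier G"
      using ab A'(2) B'(2) by blast+
    have "x \<otimes> y = a \<otimes> (b \<otimes> a') \<otimes> b'" using ab(3,6) c by (simp add: m_assoc)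
    also have "\<dots> = a \<otimes> (a' \<otimes> b) \<otimes> b'" using comm[OF ab(4,2)] by simp
    also have "\<dots> = (a \<otimes> a') \<otimes> (b \<otimes> b')" using c by (simp add: m_assoc)
    finally have "x \<otimes> y = (a \<otimes> a') \<otimes> (b \<otimes> b')" .
    moreover have "a \<otimes> a' \<in> A" "b \<otimes> b' \<in> B"
      using ab subgroup.m_closed[OF A'(1)] subgroup.m_closed[OF B'(1)] by blast+
    ultimately show "x \<otimes> y \<in> A <#> B" using set_mult_memI by simp
  qed
  fix k x assume k: "k \<in> K" and x: "x \<in> A <#> B"
  from x obtain a b where ab: "a \<in> A" "b \<in> B" "x = a \<otimes> b" by (rule set_mult_memE)
  have "k \<otimes> x \<otimes> inv k = (k \<otimes> a \<otimes> inv k) \<otimes> (k \<otimes> b \<otimes> inv k)"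
    unfolding ab(3) using k K ab A'(2) B'(2) by (intro conj_mult) blast+
  moreover have "k \<otimes> a \<otimes> inv k \<in> A" "k \<otimes> b \<otimes> inv k \<in> B" using A'(4) B'(4) k ab by blast+
  ultimately show "k \<otimes> x \<otimes> inv k \<in> A <#> B" using set_mult_memI by simp
qed

lemma set_mult_Int_trivial:
  assumes A: "subgroup A G" and B: "subgroup B G" and T: "subgroup T G"
    and comm: "\<And>a b. a \<in> A \<Longrightarrow> b \<in> B \<Longrightarrow> a \<otimes> b = b \<otimes> a"
    and AB: "A \<inter> B = {\<one>}" and TAB: "T \<inter> (A <#> B) = {\<one>}"
  shows "A \<inter> (B <#> T) = {\<one>}"
proof
  show "{\<one>} \<subseteq> A \<inter> (B <#> T)"
    using subgroup.one_closed[OF A] set_mult_memI[OF subgroup.one_closed[OF B] subgroup.one_closed[OF T]]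
    by simp
  show "A \<inter> (B <#> T) \<subseteq> {\<one>}"
  proof
    fix x assume "x \<in> A \<inter> (B <#> T)"
    then obtain b t where x: "x \<in> A" "b \<in> B" "t \<in> T" "x = b \<otimes> t" by (blast elim: set_mult_memE)
    have c: "x \<in> carrier G" "b \<in> carrier G" "t \<in> carrier G"
      using x subgroup.subset[OF A] subgroup.subset[OF B] subgroup.subset[OF T] by blast+
    have ib: "inv b \<in> B" using x(2) subgroup.m_inv_closed[OF B] by blast
    have "t = inv b \<otimes> x" using x(4) c by simp
    also have "\<dots> = x \<otimes> inv b" using comm[OF x(1) ib] by (rule sym)
    finally have "t \<in> A <#> B" using set_mult_memI[OF x(1) ib] by simp
    then have "t = \<one>" using TAB x(3) by blast
    then have "x = b" using x(4) c by simp
    then show "x \<in> {\<one>}" using AB x(1,2) by blast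
  qed
qed

lemma invariant_complement_extend:
  assumes K: "K \<subseteq> carrier G"
    and U: "invariant_subgroup G K U" and U_comm: "\<And>x y. x \<in> U \<Longrightarrow> y \<in> U \<Longrightarrow> x \<otimes> y = y \<otimes> x"
    and A: "invariant_subgroup G K A" "A \<subseteq> U"
    and B: "invariant_subgroup G K B" "B \<subseteq> U" "A \<inter> B = {\<one>}"
    and T: "minimal_invariant G K U T" "\<not> T \<subseteq> A <#> B"
  shows "invariant_subgroup G K (B <#> T)" "B <#> T \<subseteq> U" "A \<inter> (B <#> T) = {\<one>}" "B \<subset> B <#> T"
proof -
  note U' = invariant_subgroupD[OF U] and A' = invariant_subgroupD[OF A(1)]
  note B' = invariant_subgroupD[OF B(1)]
  note T_inv = minimal_invariantD(1)[OF T(1)] and TU = minimal_invariantD(2)[OF T(1)]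
  note T' = invariant_subgroupD[OF T_inv]
  have AB_comm: "\<And>a b. a \<in> A \<Longrightarrow> b \<in> B \<Longrightarrow> a \<otimes> b = b \<otimes> a" using U_comm A(2) B(2) by blast
  have AB: "invariant_subgroup G K (A <#> B)" using commuting_set_mult_invariant[OF A(1) B(1) K AB_comm] .
  have "T \<inter> (A <#> B) \<noteq> T" using T(2) by blast
  then have TAB: "T \<inter> (A <#> B) = {\<one>}"
    using T(1) invariant_subgroup_Int[OF T_inv AB] unfolding minimal_invariant_def by blast
  have BT_comm: "\<And>a b. a \<in> B \<Longrightarrow> b \<in> T \<Longrightarrow> a \<otimes> b = b \<otimes> a" using U_comm B(2) TU by blast
  show "invariant_subgroup G K (B <#> T)" using commuting_set_mult_invariant[OF B(1) T_inv K BT_comm] .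
  have "b \<otimes> t \<in> U" if "b \<in> B" "t \<in> T" for b t using that B(2) TU subgroup.m_closed[OF U'(1)] by blast
  then show "B <#> T \<subseteq> U" by (blast elim: set_mult_memE)
  show "A \<inter> (B <#> T) = {\<one>}" using set_mult_Int_trivial[OF A'(1) B'(1) T'(1) AB_comm B(3) TAB] .
  have "B \<subseteq> B <#> T" using subset_set_mult_left[OF T'(3) B'(2)] .
  moreover have "T \<subseteq> B <#> T" using subset_set_mult_right[OF B'(3) T'(2)] .
  moreover have "\<not> T \<subseteq> B" using T(2) subset_set_mult_right[OF A'(3) B'(2)] by blast
  ultimately show "B \<subset> B <#> T" by blast
qed

text \<open>An invariant subgroup B of U maximal with \<open>A \<inter> B = {\<one>}\<close> is a complement of A in U:
  otherwise some minimal invariant subgroup T of U lies outside AB, and BT is a larger such subgroup.\<close>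

lemma invariant_complement_exists:
  assumes fin: "finite (carrier G)" and K: "K \<subseteq> carrier G"
    and U: "invariant_subgroup G K U" and U_comm: "\<And>x y. x \<in> U \<Longrightarrow> y \<in> U \<Longrightarrow> x \<otimes> y = y \<otimes> x"
    and U_socle: "U \<subseteq> invariant_socle G K U"
    and A: "invariant_subgroup G K A" "A \<subseteq> U"
  shows "\<exists>B. invariant_subgroup G K B \<and> B \<subseteq> U \<and> A \<inter> B = {\<one>} \<and> U \<subseteq> A <#> B"
proof -
  let ?Q = "\<lambda>B. invariant_subgroup G K B \<and> B \<subseteq> U \<and> A \<inter> B = {\<one>}"
  note U' = invariant_subgroupD[OF U] and A' = invariant_subgroupD[OF A(1)]
  have "?Q {\<one>}" using invariant_subgroup_trivial[OF K] A'(3) U'(3) by blast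
  moreover have "card B < Suc (card (carrier G))" if "?Q B" for B
  proof -
    have "B \<subseteq> carrier G" using that U'(2) by blast
    then show ?thesis using card_mono[OF fin] by (simp add: less_Suc_eq_le)
  qed
  ultimately obtain B where B: "invariant_subgroup G K B" "B \<subseteq> U" "A \<inter> B = {\<one>}"
    and greatest: "\<And>B'. ?Q B' \<Longrightarrow> card B' \<le> card B"
    using ex_has_greatest_nat[of ?Q "{\<one>}" card "Suc (card (carrier G))"] by blast
  have AB: "invariant_subgroup G K (A <#> B)"
    using commuting_set_mult_invariant[OF A(1) B(1) K] U_comm A(2) B(2) by blast
  have "U \<subseteq> A <#> B"
  proof (rule ccontr)
    assume "\<not> U \<subseteq> A <#> B"
    then have "\<not> \<Union>{T. minimal_invariant G K U T} \<subseteq> A <#> B"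
      using U_socle generate_subgroup_incl[OF _ invariant_subgroupD(1)[OF AB]]
      unfolding invariant_socle_def by blast
    then obtain T where T: "minimal_invariant G K U T" "\<not> T \<subseteq> A <#> B" by blast
    note BT = invariant_complement_extend[OF K U U_comm A B T]
    have "B <#> T \<subseteq> carrier G" using BT(2) U'(2) by blast
    then have "card B < card (B <#> T)" using psubset_card_mono[OF finite_subset[OF _ fin] BT(4)] by blast
    moreover have "card (B <#> T) \<le> card B" using greatest[of "B <#> T"] BT(1-3) by blast
    ultimately show False by linarith
  qed
  then show ?thesis using B by blast
qed

lemma subset_invariant_socle_if_completely_reducible:
  assumes fin: "finite (carrier G)" and K: "K \<subseteq> carrier G"
    and U: "invariant_subgroup G K U" and U_comm: "\<And>x y. x \<in> U \<Longrightarrow> y \<in> U \<Longrightarrow> x \<otimes> y = y \<otimes> x"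
    and U_socle: "U \<subseteq> invariant_socle G K U"
    and W: "invariant_subgroup G K W" "W \<subseteq> U"
  shows "W \<subseteq> invariant_socle G K W"
proof
  define A where "A = invariant_socle G K W"
  have W_sub: "subgroup W G" using W(1) by (rule invariant_subgroupD)
  have A_inv: "invariant_subgroup G K A"
    unfolding A_def using invariant_socle_invariant[OF K subgroup.subset[OF W_sub]] .
  have AW: "A \<subseteq> W" unfolding A_def using invariant_socle_subset[OF W_sub] .
  obtain B where B: "invariant_subgroup G K B" "A \<inter> B = {\<one>}" "U \<subseteq> A <#> B"
    using invariant_complement_exists[OF fin K U U_comm U_socle A_inv] AW W(2) by blast
  have WB: "W \<inter> B = {\<one>}"
  proof (rule ccontr)
    assume "W \<inter> B \<noteq> {\<one>}"
    then obtain T where T: "minimal_invariant G K (W \<inter> B) T"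
      using minimal_invariant_exists[OF fin invariant_subgroup_Int[OF W(1) B(1)]] by blast
    have "T \<subseteq> A"
      unfolding A_def using minimal_invariant_subset_socle minimal_invariant_mono[OF T] by blast
    then show False using B(2) minimal_invariantD(2,3)[OF T] by blast
  qed
  fix w assume w: "w \<in> W"
  then obtain a b where ab: "a \<in> A" "b \<in> B" "w = a \<otimes> b"
    using B(3) W(2) by (blast elim: set_mult_memE)
  have c: "a \<in> carrier G" "b \<in> carrier G"
    using ab(1,2) invariant_subgroupD(2)[OF A_inv] invariant_subgroupD(2)[OF B(1)] by blast+
  have "inv a \<in> W" using ab(1) AW subgroup.m_inv_closed[OF W_sub] by blast
  then have "inv a \<otimes> w \<in> W" using w subgroup.m_closed[OF W_sub] by blast
  moreover have "inv a \<otimes> w = b" using ab(3) c by simp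
  ultimately have "b = \<one>" using WB ab(2) by blast
  then show "w \<in> A" using ab c by simp
qed

lemma conj_invariant_subgroup:
  assumes g: "g \<in> carrier G" and K: "K \<subseteq> carrier G"
    and K_conj: "\<And>k. k \<in> K \<Longrightarrow> inv g \<otimes> k \<otimes> g \<in> K"
    and T: "invariant_subgroup G K T"
  shows "invariant_subgroup G K ((\<lambda>m. g \<otimes> m \<otimes> inv g) ` T)"
  unfolding invariant_subgroup_def
proof (intro conjI ballI)
  note T' = invariant_subgroupD[OF T]
  have "(\<lambda>m. g \<otimes> m \<otimes> inv g) \<in> hom G G" using g by (intro homI) (simp_all add: conj_mult)
  then have "group_hom G G (\<lambda>m. g \<otimes> m \<otimes> inv g)"
    unfolding group_hom_def group_hom_axioms_def using is_group by blast
  then show "subgroup ((\<lambda>m. g \<otimes> m \<otimes> inv g) ` T) G"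
    using group_hom.subgroup_img_is_subgroup[OF _ T'(1)] by blast
  fix k a assume k: "k \<in> K" and "a \<in> (\<lambda>m. g \<otimes> m \<otimes> inv g) ` T"
  then obtain m where m: "m \<in> T" "a = g \<otimes> m \<otimes> inv g" by blast
  define k' where "k' = inv g \<otimes> k \<otimes> g"
  have kc: "k \<in> carrier G" and mc: "m \<in> carrier G" using k K m T'(2) by blast+
  have "k \<otimes> a \<otimes> inv k = g \<otimes> (k' \<otimes> m \<otimes> inv k') \<otimes> inv g"
    using g kc mc m(2) unfolding k'_def by (simp add: m_assoc inv_mult_group)
  moreover have "k' \<otimes> m \<otimes> inv k' \<in> T" using T'(4) K_conj k m(1) unfolding k'_def by blast
  ultimately show "k \<otimes> a \<otimes> inv k \<in> (\<lambda>m. g \<otimes> m \<otimes> inv g) ` T" by blast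
qed

lemma minimal_invariant_conj:
  assumes g: "g \<in> carrier G" and K: "K \<subseteq> carrier G"
    and K_conj: "\<And>k. k \<in> K \<Longrightarrow> g \<otimes> k \<otimes> inv g \<in> K" "\<And>k. k \<in> K \<Longrightarrow> inv g \<otimes> k \<otimes> g \<in> K"
    and T: "minimal_invariant G K K T"
  shows "minimal_invariant G K K ((\<lambda>m. g \<otimes> m \<otimes> inv g) ` T)"
  unfolding minimal_invariant_def
proof (intro conjI allI impI)
  let ?c = "\<lambda>g m. g \<otimes> m \<otimes> inv g"
  note T_inv = minimal_invariantD(1)[OF T]
  have sT: "T \<subseteq> carrier G" using invariant_subgroupD(2)[OF T_inv] .
  have conj_inv: "?c (inv h) ` ?c h ` V = V" if h: "h \<in> carrier G" and V: "V \<subseteq> carrier G" for h V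
  proof -
    have "?c (inv h) (?c h v) = v" if "v \<in> V" for v
      using that h V by (simp add: m_assoc subset_iff)
    then have "(\<lambda>v. ?c (inv h) (?c h v)) ` V = (\<lambda>v. v) ` V" by (rule image_cong[OF refl])
    then show ?thesis by (simp add: image_image)
  qed
  have ig: "inv g \<in> carrier G" and K_conj': "\<And>k. k \<in> K \<Longrightarrow> inv (inv g) \<otimes> k \<otimes> inv g \<in> K"
    using g K_conj(1) by simp_all
  show "invariant_subgroup G K (?c g ` T)" using conj_invariant_subgroup[OF g K K_conj(2) T_inv] .
  show "?c g ` T \<subseteq> K" using K_conj(1) minimal_invariantD(2)[OF T] by blast
  show "?c g ` T \<noteq> {\<one>}"
  proof
    assume "?c g ` T = {\<one>}"
    then have "T = {\<one>}" using conj_inv[OF g sT] g by simp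
    then show False using minimal_invariantD(3)[OF T] by blast
  qed
  fix T' assume T': "invariant_subgroup G K T'" "T' \<noteq> {\<one>}" "T' \<subseteq> ?c g ` T"
  have sT': "T' \<subseteq> carrier G" using invariant_subgroupD(2)[OF T'(1)] .
  have "?c (inv g) ` T' \<subseteq> T" using T'(3) conj_inv[OF g sT] by blast
  moreover have "?c (inv g) ` T' \<noteq> {\<one>}"
  proof
    assume "?c (inv g) ` T' = {\<one>}"
    then have "T' = {\<one>}" using conj_inv[OF ig sT'] g by simp
    then show False using T'(2) by blast
  qed
  ultimately have "?c (inv g) ` T' = T"
    using T conj_invariant_subgroup[OF ig K K_conj' T'(1)] unfolding minimal_invariant_def by blast
  then show "T' = ?c g ` T" using conj_inv[OF ig sT'] g by simp
qed

lemma conj_nat_pow: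
  assumes g: "g \<in> carrier G" and x: "x \<in> carrier G"
  shows "(g \<otimes> x \<otimes> inv g) [^] (n::nat) = g \<otimes> x [^] n \<otimes> inv g"
proof (induction n)
  case 0 then show ?case using g by simp
next
  case (Suc n)
  have "(g \<otimes> x \<otimes> inv g) [^] Suc n = (g \<otimes> x [^] n \<otimes> inv g) \<otimes> (g \<otimes> x \<otimes> inv g)"
    using Suc by simp
  also have "\<dots> = g \<otimes> (x [^] n \<otimes> x) \<otimes> inv g" using conj_mult[OF g nat_pow_closed[OF x] x] by simp
  finally show ?case by simp
qed

lemma subgroup_nat_pow_closed:
  assumes "subgroup H G" "h \<in> H" shows "h [^] (n::nat) \<in> H"
  using subgroup_int_pow_closed[OF assms, of "int n"] subgroup.subset[OF assms(1)] assms(2)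
  by (simp add: int_pow_int subset_iff)

lemma exists_prime_order_element:
  assumes fin: "finite (carrier G)" and A: "subgroup A G" and a: "a \<in> A" "a \<noteq> \<one>"
  obtains p :: nat and b where "Factorial_Ring.prime p" "b \<in> A" "b \<noteq> \<one>" "b [^] p = \<one>"
proof -
  have ac: "a \<in> carrier G" using a(1) subgroup.subset[OF A] by blast
  have "ord a \<noteq> 1" using ord_eq_1[OF ac] a(2) by simp
  then obtain p :: nat where p: "Factorial_Ring.prime p" "p dvd ord a" using prime_factor_nat by blast
  then obtain k where k: "ord a = p * k" by blast
  have k0: "k \<noteq> 0" using k ord_ge_1[OF fin ac] by auto
  have ord_b: "ord (a [^] k) = p" using ord_pow[OF ac _ k0] k k0 by simp
  have "a [^] k \<noteq> \<one>" using ord_b ord_eq_1[OF nat_pow_closed[OF ac]] p(1) by (metis not_prime_1)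
  moreover have "(a [^] k) [^] p = \<one>" using pow_ord_eq_1[OF nat_pow_closed[OF ac, of k]] unfolding ord_b .
  ultimately show ?thesis using that p(1) subgroup_nat_pow_closed[OF A a(1)] by blast
qed

lemma torsion_invariant:
  assumes K: "K \<subseteq> carrier G" and A: "invariant_subgroup G K A"
    and A_comm: "\<And>a b. a \<in> A \<Longrightarrow> b \<in> A \<Longrightarrow> a \<otimes> b = b \<otimes> a"
  shows "invariant_subgroup G K {x\<in>A. x [^] (p::nat) = \<one>}"
  unfolding invariant_subgroup_def
proof (intro conjI ballI)
  note A' = invariant_subgroupD[OF A]
  show "subgroup {x\<in>A. x [^] p = \<one>} G"
  proof (rule subgroupI)
    show "{x\<in>A. x [^] p = \<one>} \<subseteq> carrier G" using A'(2) by blast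
    show "{x\<in>A. x [^] p = \<one>} \<noteq> {}" using A'(3) by auto
  next
    fix x assume "x \<in> {x\<in>A. x [^] p = \<one>}"
    then have x: "x \<in> A" "x [^] p = \<one>" and xc: "x \<in> carrier G" using A'(2) by blast+
    have "inv x [^] p = \<one>" using nat_pow_inv[OF xc, of p] x(2) by simp
    then show "inv x \<in> {x\<in>A. x [^] p = \<one>}" using subgroup.m_inv_closed[OF A'(1) x(1)] by blast
  next
    fix x y assume "x \<in> {x\<in>A. x [^] p = \<one>}" "y \<in> {x\<in>A. x [^] p = \<one>}"
    then have x: "x \<in> A" "x [^] p = \<one>" and y: "y \<in> A" "y [^] p = \<one>"
      and c: "x \<in> carrier G" "y \<in> carrier G" using A'(2) by blast+
    have "(x \<otimes> y) [^] p = \<one>" using pow_mult_distrib[OF A_comm[OF x(1) y(1)] c, of p] x(2) y(2) by simp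
    then show "x \<otimes> y \<in> {x\<in>A. x [^] p = \<one>}" using subgroup.m_closed[OF A'(1) x(1) y(1)] by blast
  qed
  fix k x assume k: "k \<in> K" and "x \<in> {x\<in>A. x [^] p = \<one>}"
  then have x: "x \<in> A" "x [^] p = \<one>" and c: "k \<in> carrier G" "x \<in> carrier G" using K A'(2) by blast+
  have "(k \<otimes> x \<otimes> inv k) [^] p = \<one>" using conj_nat_pow[OF c] x(2) c(1) by simp
  then show "k \<otimes> x \<otimes> inv k \<in> {x\<in>A. x [^] p = \<one>}" using A'(4)[OF k x(1)] by blast
qed

lemma centraliser_subgroup:
  assumes A: "subgroup A G" and H: "H \<subseteq> carrier G"
  shows "subgroup {a\<in>A. \<forall>h\<in>H. a \<otimes> h = h \<otimes> a} G"
proof (rule subgroupI)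
  let ?Z = "{a\<in>A. \<forall>h\<in>H. a \<otimes> h = h \<otimes> a}"
  show "?Z \<subseteq> carrier G" using subgroup.subset[OF A] by blast
  have "\<one> \<otimes> h = h \<otimes> \<one>" if "h \<in> H" for h using that H by auto
  then show "?Z \<noteq> {}" using subgroup.one_closed[OF A] by blast
next
  fix a assume a: "a \<in> {a\<in>A. \<forall>h\<in>H. a \<otimes> h = h \<otimes> a}"
  have ac: "a \<in> carrier G" using a subgroup.subset[OF A] by blast
  have "inv a \<otimes> h = h \<otimes> inv a" if h: "h \<in> H" for h
  proof -
    have hc: "h \<in> carrier G" using h H by blast
    have "a \<otimes> h = h \<otimes> a" using a h by blast
    then have "inv a \<otimes> (a \<otimes> h) \<otimes> inv a = inv a \<otimes> (h \<otimes> a) \<otimes> inv a" by simp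
    then show ?thesis using ac hc by (simp add: m_assoc)
  qed
  then show "inv a \<in> {a\<in>A. \<forall>h\<in>H. a \<otimes> h = h \<otimes> a}" using subgroup.m_inv_closed[OF A] a by blast
next
  fix a b assume a: "a \<in> {a\<in>A. \<forall>h\<in>H. a \<otimes> h = h \<otimes> a}" and b: "b \<in> {a\<in>A. \<forall>h\<in>H. a \<otimes> h = h \<otimes> a}"
  have c: "a \<in> carrier G" "b \<in> carrier G" using a b subgroup.subset[OF A] by blast+
  have "(a \<otimes> b) \<otimes> h = h \<otimes> (a \<otimes> b)" if h: "h \<in> H" for h
  proof -
    have hc: "h \<in> carrier G" using h H by blast
    have "(a \<otimes> b) \<otimes> h = a \<otimes> (h \<otimes> b)" using b h c hc by (simp add: m_assoc)
    also have "\<dots> = h \<otimes> (a \<otimes> b)" using a h c hc by (simp add: m_assoc[symmetric])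
    finally show ?thesis .
  qed
  then show "a \<otimes> b \<in> {a\<in>A. \<forall>h\<in>H. a \<otimes> h = h \<otimes> a}" using subgroup.m_closed[OF A] a b by blast
qed

lemma centraliser_invariant:
  assumes K: "subgroup K G" and A: "invariant_subgroup G K A" and H: "invariant_subgroup G K H"
  shows "invariant_subgroup G K {a\<in>A. \<forall>h\<in>H. a \<otimes> h = h \<otimes> a}"
  unfolding invariant_subgroup_def
proof (intro conjI ballI)
  note A' = invariant_subgroupD[OF A] and H' = invariant_subgroupD[OF H]
  show "subgroup {a\<in>A. \<forall>h\<in>H. a \<otimes> h = h \<otimes> a} G" using centraliser_subgroup[OF A'(1) H'(2)] .
  fix k a assume k: "k \<in> K" and a: "a \<in> {a\<in>A. \<forall>h\<in>H. a \<otimes> h = h \<otimes> a}"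
  have kc: "k \<in> carrier G" and ac: "a \<in> carrier G" using k a subgroup.subset[OF K] A'(2) by blast+
  have ik: "inv k \<in> K" using subgroup.m_inv_closed[OF K k] .
  have "(k \<otimes> a \<otimes> inv k) \<otimes> h = h \<otimes> (k \<otimes> a \<otimes> inv k)" if h: "h \<in> H" for h
  proof -
    define h' where "h' = inv k \<otimes> h \<otimes> inv (inv k)"
    have h'H: "h' \<in> H" unfolding h'_def using H'(4)[OF ik h] .
    have hc: "h \<in> carrier G" and h'c: "h' \<in> carrier G" using h h'H H'(2) by blast+
    have hh': "h = k \<otimes> h' \<otimes> inv k" unfolding h'_def using kc hc by (simp add: m_assoc)
    have "(k \<otimes> a \<otimes> inv k) \<otimes> h = k \<otimes> (a \<otimes> h') \<otimes> inv k"
      unfolding hh' using conj_mult[OF kc ac h'c] by simp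
    also have "\<dots> = k \<otimes> (h' \<otimes> a) \<otimes> inv k" using a h'H by simp
    also have "\<dots> = h \<otimes> (k \<otimes> a \<otimes> inv k)"
      unfolding hh' using conj_mult[OF kc h'c ac] by simp
    finally show ?thesis .
  qed
  then show "k \<otimes> a \<otimes> inv k \<in> {a\<in>A. \<forall>h\<in>H. a \<otimes> h = h \<otimes> a}" using A'(4)[OF k] a by blast
qed

lemma invariant_subgroups_commute:
  assumes A: "invariant_subgroup G K A" "A \<subseteq> K" and B: "invariant_subgroup G K B" "B \<subseteq> K"
    and AB: "A \<inter> B = {\<one>}" and a: "a \<in> A" and b: "b \<in> B"
  shows "a \<otimes> b = b \<otimes> a"
proof -
  note A' = invariant_subgroupD[OF A(1)] and B' = invariant_subgroupD[OF B(1)]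
  have c: "a \<in> carrier G" "b \<in> carrier G" using a b A'(2) B'(2) by blast+
  have "a \<otimes> b \<otimes> inv a \<in> B" using B'(4) A(2) a b by blast
  then have in_B: "a \<otimes> b \<otimes> inv a \<otimes> inv b \<in> B"
    using subgroup.m_closed[OF B'(1) _ subgroup.m_inv_closed[OF B'(1) b]] by blast
  have "b \<otimes> inv a \<otimes> inv b \<in> A"
    using A'(4)[OF subsetD[OF B(2) b] subgroup.m_inv_closed[OF A'(1) a]] .
  then have "a \<otimes> (b \<otimes> inv a \<otimes> inv b) \<in> A" using subgroup.m_closed[OF A'(1) a] by blast
  then have "a \<otimes> b \<otimes> inv a \<otimes> inv b \<in> A" using c by (simp add: m_assoc)
  then have "a \<otimes> b \<otimes> inv a \<otimes> inv b = \<one>" using in_B AB by blast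
  then have "a \<otimes> b \<otimes> inv a \<otimes> inv b \<otimes> (b \<otimes> a) = b \<otimes> a" using c by simp
  then show ?thesis using c by (simp add: m_assoc)
qed

lemma generator_mem_if_prime_order:
  assumes x: "x \<in> carrier G" "x [^] (p::nat) = \<one>" "x \<noteq> \<one>" and p: "Factorial_Ring.prime p"
    and T: "subgroup T G" and y: "y \<in> T" "y \<in> generate G {x}" "y \<noteq> \<one>"
  shows "x \<in> T"
proof -
  obtain i :: int where i: "y = x [^] i" using y(2) unfolding generate_pow[OF x(1)] by blast
  have "ord x dvd p" using pow_eq_id[OF x(1)] x(2) by blast
  moreover have "ord x \<noteq> 1" using ord_eq_1[OF x(1)] x(3) by simp
  ultimately have ord_x: "ord x = p" using p prime_nat_iff by blast
  have "\<not> int p dvd i" using int_pow_eq_id[OF x(1), of i] ord_x i y(3) by simp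
  moreover have "Factorial_Ring.prime (int p)" using p by simp
  ultimately have "coprime (int p) i" using prime_imp_coprime by blast
  then have "gcd i (int p) = 1" by (simp add: coprime_iff_gcd_eq_1 gcd.commute)
  then obtain u v where uv: "u * i + v * int p = 1" using bezout_int[of i "int p"] by auto
  have "int p dvd (1 - i * u)" using uv by (metis add_diff_cancel_left' dvd_triv_right mult.commute)
  then have "x [^] (i * u) = x [^] (1::int)" using int_pow_eq[OF x(1)] ord_x by simp
  then have "y [^] u = x" using i int_pow_pow[OF x(1)] int_pow_1[OF x(1)] by simp
  then show ?thesis using subgroup_int_pow_closed[OF T y(1), of u] by simp
qed

lemma subset_invariant_socle_if_prime_exponent:
  assumes fin: "finite (carrier G)" and U: "subgroup U G"
    and U_comm: "\<And>a b. a \<in> U \<Longrightarrow> b \<in> U \<Longrightarrow> a \<otimes> b = b \<otimes> a"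
    and p: "Factorial_Ring.prime (p::nat)" and U_exp: "\<forall>x\<in>U. x [^] p = \<one>"
  shows "U \<subseteq> invariant_socle G U U"
proof
  fix x assume xU: "x \<in> U"
  have xc: "x \<in> carrier G" using xU subgroup.subset[OF U] by blast
  show "x \<in> invariant_socle G U U"
  proof (cases "x = \<one>")
    case True then show ?thesis unfolding invariant_socle_def using generate.one by simp
  next
    case False
    define H where "H = generate G {x}"
    have sU: "U \<subseteq> carrier G" using subgroup.subset[OF U] .
    have H_inv: "invariant_subgroup G U H" unfolding H_def
    proof (rule invariant_subgroup_generate[OF sU])
      show "{x} \<subseteq> carrier G" using xc by blast
      fix k h assume k: "k \<in> U" and h: "h \<in> {x}"
      have kc: "k \<in> carrier G" using k sU by blast
      have "k \<otimes> x \<otimes> inv k = x \<otimes> k \<otimes> inv k" using U_comm[OF k xU] by simp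
      also have "\<dots> = x" using kc xc by (simp add: m_assoc)
      finally show "k \<otimes> h \<otimes> inv k \<in> {x}" using h by simp
    qed
    have HU: "H \<subseteq> U" unfolding H_def using generate_subgroup_incl[OF _ U] xU by blast
    have "x \<in> H" unfolding H_def by (rule generate.incl) simp
    then obtain T where T: "minimal_invariant G U H T"
      using minimal_invariant_exists[OF fin H_inv] False by blast
    obtain y where y: "y \<in> T" "y \<noteq> \<one>" using minimal_invariantD(3)[OF T] by blast
    have "y \<in> H" using y(1) minimal_invariantD(2)[OF T] by blast
    then have "x \<in> T"
      using generator_mem_if_prime_order[OF xc U_exp[rule_format, OF xU] False p
          invariant_subgroupD(1)[OF minimal_invariantD(1)[OF T]] y(1)] y(2) unfolding H_def by blast
    then show ?thesis using minimal_invariant_subset_socle[OF minimal_invariant_mono[OF T HU]] by blast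
  qed
qed

lemma normal_restrict_iff:
  assumes H: "subgroup H G"
  shows "N \<lhd> G\<lparr>carrier := H\<rparr> \<longleftrightarrow> invariant_subgroup G H N \<and> N \<subseteq> H"
proof -
  interpret GH: group "G\<lparr>carrier := H\<rparr>" using subgroup_imp_group[OF H] .
  show ?thesis
  proof
    assume "N \<lhd> G\<lparr>carrier := H\<rparr>"
    then have sub: "subgroup N (G\<lparr>carrier := H\<rparr>)"
      and cl: "\<forall>x\<in>H. \<forall>h\<in>N. x \<otimes> h \<otimes> inv\<^bsub>G\<lparr>carrier := H\<rparr>\<^esub> x \<in> N"
      using GH.normal_inv_iff by auto
    have "N \<subseteq> H" using subgroup.subset[OF sub] by simp
    moreover have "subgroup N G" using incl_subgroup[OF H sub] .
    moreover have "\<forall>x\<in>H. \<forall>h\<in>N. x \<otimes> h \<otimes> inv x \<in> N" using cl m_inv_consistent[OF H] by auto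
    ultimately show "invariant_subgroup G H N \<and> N \<subseteq> H" unfolding invariant_subgroup_def by auto
  next
    assume N: "invariant_subgroup G H N \<and> N \<subseteq> H"
    then have "subgroup N (G\<lparr>carrier := H\<rparr>)"
      using subgroup_incl[OF _ H] unfolding invariant_subgroup_def by auto
    moreover have "\<forall>x\<in>H. \<forall>h\<in>N. x \<otimes> h \<otimes> inv\<^bsub>G\<lparr>carrier := H\<rparr>\<^esub> x \<in> N"
      using N m_inv_consistent[OF H] unfolding invariant_subgroup_def by auto
    ultimately show "N \<lhd> G\<lparr>carrier := H\<rparr>" using GH.normal_inv_iff by auto
  qed
qed

end

section \<open>Permutation groups\<close>

lemma BijGroup_mult_apply:
  "f \<in> carrier (Sym P) \<Longrightarrow> g \<in> carrier (Sym P) \<Longrightarrow> x \<in> P \<Longrightarrow> (f \<otimes>\<^bsub>Sym P\<^esub> g) x = f (g x)"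
  by (simp add: BijGroup_def compose_def)

lemma BijGroup_one_apply: "x \<in> P \<Longrightarrow> \<one>\<^bsub>Sym P\<^esub> x = x"
  by (simp add: BijGroup_def)

lemma BijGroup_closed: "f \<in> carrier (Sym P) \<Longrightarrow> x \<in> P \<Longrightarrow> f x \<in> P"
  by (auto simp: BijGroup_def Bij_def bij_betw_def)

lemma BijGroup_outside: "f \<in> carrier (Sym P) \<Longrightarrow> x \<notin> P \<Longrightarrow> f x = undefined"
  using Bij_imp_extensional[of f P] by (auto simp: BijGroup_def extensional_def)

lemma BijGroup_eqI:
  assumes "f \<in> carrier (Sym P)" "g \<in> carrier (Sym P)" "\<And>x. x \<in> P \<Longrightarrow> f x = g x"
  shows "f = g"
  using assms Bij_imp_extensional[of f P] Bij_imp_extensional[of g P]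
  by (auto simp: BijGroup_def intro: extensionalityI)

lemma BijGroup_inv_apply:
  assumes f: "f \<in> carrier (Sym P)" and x: "x \<in> P"
  shows "(inv\<^bsub>Sym P\<^esub> f) (f x) = x" and "f ((inv\<^bsub>Sym P\<^esub> f) x) = x"
proof -
  interpret group "Sym P" by (rule group_BijGroup)
  have "(inv\<^bsub>Sym P\<^esub> f \<otimes>\<^bsub>Sym P\<^esub> f) x = x" "(f \<otimes>\<^bsub>Sym P\<^esub> inv\<^bsub>Sym P\<^esub> f) x = x"
    using f BijGroup_one_apply[OF x] by simp_all
  then show "(inv\<^bsub>Sym P\<^esub> f) (f x) = x" "f ((inv\<^bsub>Sym P\<^esub> f) x) = x"
    using BijGroup_mult_apply[OF inv_closed[OF f] f x] BijGroup_mult_apply[OF f inv_closed[OF f] x]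
    by simp_all
qed

lemma BijGroup_conj_apply:
  assumes g: "g \<in> carrier (Sym P)" and f: "f \<in> carrier (Sym P)" and x: "x \<in> P"
  shows "(g \<otimes>\<^bsub>Sym P\<^esub> f \<otimes>\<^bsub>Sym P\<^esub> inv\<^bsub>Sym P\<^esub> g) x = g (f ((inv\<^bsub>Sym P\<^esub> g) x))"
proof -
  interpret group "Sym P" by (rule group_BijGroup)
  have "(inv\<^bsub>Sym P\<^esub> g) x \<in> P" using BijGroup_closed[OF inv_closed[OF g] x] .
  then show ?thesis
    using BijGroup_mult_apply[OF m_closed[OF g f] inv_closed[OF g] x] BijGroup_mult_apply[OF g f]
    by simp
qed

lemma finite_BijGroup: "finite P \<Longrightarrow> finite (carrier (Sym P))"
proof -
  assume "finite P"
  moreover have "carrier (Sym P) \<subseteq> PiE P (\<lambda>_. P)"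
    by (auto simp: BijGroup_def Bij_def bij_betw_def PiE_def)
  ultimately show ?thesis by (meson finite_PiE finite_subset)
qed

text \<open>The value \<open>undefined\<close> outside P keeps restrictions extensional, as elements of
  \<open>Sym P\<close> must be.\<close>

definition restrict_perm :: "'a set \<Rightarrow> 'a set \<Rightarrow> ('a \<Rightarrow> 'a) \<Rightarrow> 'a \<Rightarrow> 'a" where
  "restrict_perm P D f = (\<lambda>x. if x \<in> D then f x else if x \<in> P then x else undefined)"

context
  fixes P D :: "'a set"
  assumes D: "D \<subseteq> P"
begin

interpretation Sym: group "Sym P" by (rule group_BijGroup)

lemma restrict_perm_carrier:
  assumes f: "f \<in> carrier (Sym P)" "f ` D = D"
  shows "restrict_perm P D f \<in> carrier (Sym P)"
proof -
  have "bij_betw f D D" using f BijGroup_closed D unfolding BijGroup_def Bij_def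
    by (auto intro: bij_betw_subset)
  then have "bij_betw (restrict_perm P D f) D D"
    by (rule iffD1[OF bij_betw_cong, rotated]) (simp add: restrict_perm_def)
  moreover have "bij_betw (restrict_perm P D f) (P - D) (P - D)"
    by (rule iffD2[OF bij_betw_cong bij_betw_id]) (simp add: restrict_perm_def)
  ultimately have "bij_betw (restrict_perm P D f) (D \<union> (P - D)) (D \<union> (P - D))"
    by (rule bij_betw_combine) blast
  moreover have "D \<union> (P - D) = P" using D by blast
  moreover have "restrict_perm P D f \<in> extensional P"
    using D unfolding restrict_perm_def extensional_def by auto
  ultimately show ?thesis unfolding BijGroup_def Bij_def by simp
qed

lemma restrict_perm_apply:
  "x \<in> D \<Longrightarrow> restrict_perm P D f x = f x" "x \<in> P \<Longrightarrow> x \<notin> D \<Longrightarrow> restrict_perm P D f x = x"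
  unfolding restrict_perm_def by simp_all

lemma mult_image_eq:
  assumes f: "f \<in> carrier (Sym P)" "f ` D = D" and g: "g \<in> carrier (Sym P)" "g ` D = D"
  shows "(f \<otimes>\<^bsub>Sym P\<^esub> g) ` D = D"
proof -
  have "(f \<otimes>\<^bsub>Sym P\<^esub> g) ` D = f ` g ` D"
    unfolding image_image using BijGroup_mult_apply[OF f(1) g(1)] D by (intro image_cong) auto
  then show ?thesis using f(2) g(2) by simp
qed

lemma restrict_perm_one: "restrict_perm P D \<one>\<^bsub>Sym P\<^esub> = \<one>\<^bsub>Sym P\<^esub>"
  using D unfolding restrict_perm_def by (auto simp: BijGroup_def)

lemma restrict_perm_mult:
  assumes f: "f \<in> carrier (Sym P)" "f ` D = D" and g: "g \<in> carrier (Sym P)" "g ` D = D"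
  shows "restrict_perm P D (f \<otimes>\<^bsub>Sym P\<^esub> g) = restrict_perm P D f \<otimes>\<^bsub>Sym P\<^esub> restrict_perm P D g"
proof (rule BijGroup_eqI)
  show "restrict_perm P D (f \<otimes>\<^bsub>Sym P\<^esub> g) \<in> carrier (Sym P)"
    using restrict_perm_carrier[OF Sym.m_closed[OF f(1) g(1)] mult_image_eq[OF f g]] .
  show "restrict_perm P D f \<otimes>\<^bsub>Sym P\<^esub> restrict_perm P D g \<in> carrier (Sym P)"
    using restrict_perm_carrier[OF f] restrict_perm_carrier[OF g] by simp
  fix x assume x: "x \<in> P"
  have "(restrict_perm P D f \<otimes>\<^bsub>Sym P\<^esub> restrict_perm P D g) x = restrict_perm P D f (restrict_perm P D g x)"
    using BijGroup_mult_apply[OF restrict_perm_carrier[OF f] restrict_perm_carrier[OF g] x] .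
  moreover have "(f \<otimes>\<^bsub>Sym P\<^esub> g) x = f (g x)" using BijGroup_mult_apply[OF f(1) g(1) x] .
  moreover have "x \<in> D \<Longrightarrow> g x \<in> D" using g(2) by blast
  ultimately show "restrict_perm P D (f \<otimes>\<^bsub>Sym P\<^esub> g) x = (restrict_perm P D f \<otimes>\<^bsub>Sym P\<^esub> restrict_perm P D g) x"
    using x by (cases "x \<in> D") (simp_all add: restrict_perm_apply)
qed

lemma inv_image_eq:
  assumes f: "f \<in> carrier (Sym P)" "f ` D = D"
  shows "(inv\<^bsub>Sym P\<^esub> f) ` D = D"
proof -
  have "(inv\<^bsub>Sym P\<^esub> f) ` D = (inv\<^bsub>Sym P\<^esub> f) ` f ` D" using f(2) by simp
  also have "\<dots> = D" using BijGroup_inv_apply(1)[OF f(1)] D by (force simp: image_image)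
  finally show ?thesis .
qed

lemma restrict_perm_inv:
  assumes f: "f \<in> carrier (Sym P)" "f ` D = D"
  shows "restrict_perm P D (inv\<^bsub>Sym P\<^esub> f) = inv\<^bsub>Sym P\<^esub> (restrict_perm P D f)"
proof -
  note f' = Sym.inv_closed[OF f(1)] inv_image_eq[OF f]
  have "restrict_perm P D (inv\<^bsub>Sym P\<^esub> f) \<otimes>\<^bsub>Sym P\<^esub> restrict_perm P D f = \<one>\<^bsub>Sym P\<^esub>"
    using restrict_perm_mult[OF f' f] restrict_perm_one f(1) by simp
  then show ?thesis
    using Sym.inv_equality[OF _ restrict_perm_carrier[OF f] restrict_perm_carrier[OF f']] by simp
qed

lemma restrict_perm_conj:
  assumes k: "k \<in> carrier (Sym P)" "k ` D = D" and a: "a \<in> carrier (Sym P)" "a ` D = D"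
  shows "k \<otimes>\<^bsub>Sym P\<^esub> restrict_perm P D a \<otimes>\<^bsub>Sym P\<^esub> inv\<^bsub>Sym P\<^esub> k
    = restrict_perm P D (k \<otimes>\<^bsub>Sym P\<^esub> a \<otimes>\<^bsub>Sym P\<^esub> inv\<^bsub>Sym P\<^esub> k)"
proof (rule BijGroup_eqI)
  note k' = Sym.inv_closed[OF k(1)] inv_image_eq[OF k]
  have ra: "restrict_perm P D a \<in> carrier (Sym P)" using restrict_perm_carrier[OF a] .
  have kak: "k \<otimes>\<^bsub>Sym P\<^esub> a \<otimes>\<^bsub>Sym P\<^esub> inv\<^bsub>Sym P\<^esub> k \<in> carrier (Sym P)"
    "(k \<otimes>\<^bsub>Sym P\<^esub> a \<otimes>\<^bsub>Sym P\<^esub> inv\<^bsub>Sym P\<^esub> k) ` D = D"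
    using mult_image_eq[OF Sym.m_closed[OF k(1) a(1)] mult_image_eq[OF k a] k'] k a k' by simp_all
  show "k \<otimes>\<^bsub>Sym P\<^esub> restrict_perm P D a \<otimes>\<^bsub>Sym P\<^esub> inv\<^bsub>Sym P\<^esub> k \<in> carrier (Sym P)"
    using k(1) ra by simp
  show "restrict_perm P D (k \<otimes>\<^bsub>Sym P\<^esub> a \<otimes>\<^bsub>Sym P\<^esub> inv\<^bsub>Sym P\<^esub> k) \<in> carrier (Sym P)"
    using restrict_perm_carrier[OF kak] .
  fix x assume x: "x \<in> P"
  define y where "y = (inv\<^bsub>Sym P\<^esub> k) x"
  have y: "y \<in> P" "k y = x" unfolding y_def using BijGroup_closed[OF k'(1) x] BijGroup_inv_apply(2)[OF k(1) x] .
  have yD: "y \<in> D \<longleftrightarrow> x \<in> D"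
  proof
    show "y \<in> D \<Longrightarrow> x \<in> D" using imageI[of y D k] k(2) y(2) by simp
    show "x \<in> D \<Longrightarrow> y \<in> D" using imageI[of x D "inv\<^bsub>Sym P\<^esub> k"] k'(2) unfolding y_def by simp
  qed
  have "(k \<otimes>\<^bsub>Sym P\<^esub> restrict_perm P D a \<otimes>\<^bsub>Sym P\<^esub> inv\<^bsub>Sym P\<^esub> k) x = k (restrict_perm P D a y)"
    unfolding y_def using BijGroup_conj_apply[OF k(1) ra x] .
  moreover have "(k \<otimes>\<^bsub>Sym P\<^esub> a \<otimes>\<^bsub>Sym P\<^esub> inv\<^bsub>Sym P\<^esub> k) x = k (a y)"
    unfolding y_def using BijGroup_conj_apply[OF k(1) a(1) x] .
  ultimately show "(k \<otimes>\<^bsub>Sym P\<^esub> restrict_perm P D a \<otimes>\<^bsub>Sym P\<^esub> inv\<^bsub>Sym P\<^esub> k) x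
    = restrict_perm P D (k \<otimes>\<^bsub>Sym P\<^esub> a \<otimes>\<^bsub>Sym P\<^esub> inv\<^bsub>Sym P\<^esub> k) x"
    using x y yD by (cases "x \<in> D") (simp_all add: restrict_perm_apply)
qed

end

lemma restrict_perm_Un:
  assumes DE: "D \<subseteq> P" "E \<subseteq> P" "D \<inter> E = {}"
    and f: "f \<in> carrier (Sym P)" "f ` D = D" "f ` E = E"
  shows "restrict_perm P (D \<union> E) f = restrict_perm P D f \<otimes>\<^bsub>Sym P\<^esub> restrict_perm P E f"
proof (rule BijGroup_eqI)
  interpret Sym: group "Sym P" by (rule group_BijGroup)
  have DE_image: "f ` (D \<union> E) = D \<union> E" using f by (simp add: image_Un)
  show "restrict_perm P (D \<union> E) f \<in> carrier (Sym P)"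
    using restrict_perm_carrier[OF _ f(1) DE_image] DE by blast
  show "restrict_perm P D f \<otimes>\<^bsub>Sym P\<^esub> restrict_perm P E f \<in> carrier (Sym P)"
    using restrict_perm_carrier[OF DE(1) f(1,2)] restrict_perm_carrier[OF DE(2) f(1,3)] by simp
  fix x assume x: "x \<in> P"
  have "(restrict_perm P D f \<otimes>\<^bsub>Sym P\<^esub> restrict_perm P E f) x = restrict_perm P D f (restrict_perm P E f x)"
    using BijGroup_mult_apply[OF restrict_perm_carrier[OF DE(1) f(1,2)] restrict_perm_carrier[OF DE(2) f(1,3)] x] .
  moreover have "x \<in> E \<Longrightarrow> f x \<in> E" using f(3) by blast
  moreover have "f x \<in> P" using BijGroup_closed[OF f(1) x] .
  ultimately show "restrict_perm P (D \<union> E) f x = (restrict_perm P D f \<otimes>\<^bsub>Sym P\<^esub> restrict_perm P E f) x"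
    using x DE(3) unfolding restrict_perm_def by auto
qed

lemma restrict_perm_cong: "(\<And>x. x \<in> D \<Longrightarrow> f x = g x) \<Longrightarrow> restrict_perm P D f = restrict_perm P D g"
  unfolding restrict_perm_def by auto

lemma restrict_perm_all: "f \<in> carrier (Sym P) \<Longrightarrow> restrict_perm P P f = f"
  using BijGroup_outside[of f P] unfolding restrict_perm_def by auto

lemma socle_eq_invariant_socle:
  assumes "subgroup K (Sym P)"
  shows "socle P K = invariant_socle (Sym P) K K"
proof -
  interpret group "Sym P" by (rule group_BijGroup)
  have "minimal_normal P K M \<longleftrightarrow> minimal_invariant (Sym P) K K M" for M
    unfolding minimal_normal_def minimal_invariant_def normal_restrict_iff[OF assms] by blast
  then have "Collect (minimal_normal P K) = Collect (minimal_invariant (Sym P) K K)" by blast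
  then show ?thesis unfolding socle_def invariant_socle_def by simp
qed

definition perm_orbit :: "('a \<Rightarrow> 'a) set \<Rightarrow> 'a \<Rightarrow> 'a set" where
  "perm_orbit H x = (\<lambda>h. h x) ` H"

context
  fixes P :: "'a set" and H :: "('a \<Rightarrow> 'a) set"
  assumes H: "subgroup H (Sym P)"
begin

interpretation Sym: group "Sym P" by (rule group_BijGroup)

lemma perm_orbit_subset:
  assumes x: "x \<in> P" shows "perm_orbit H x \<subseteq> P"
proof
  fix y assume "y \<in> perm_orbit H x"
  then obtain h where "h \<in> H" "y = h x" unfolding perm_orbit_def by blast
  then show "y \<in> P" using BijGroup_closed[OF subsetD[OF subgroup.subset[OF H]] x] by simp
qed

lemma perm_orbit_self: "x \<in> P \<Longrightarrow> x \<in> perm_orbit H x"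
  unfolding perm_orbit_def
  using image_eqI[of x "\<lambda>h. h x" "\<one>\<^bsub>Sym P\<^esub>" H] subgroup.one_closed[OF H] BijGroup_one_apply
  by metis

lemma perm_orbit_image:
  assumes h: "h \<in> H" and x: "x \<in> P"
  shows "h ` perm_orbit H x = perm_orbit H x"
proof
  have hc: "h \<in> carrier (Sym P)" using h subgroup.subset[OF H] by blast
  show "h ` perm_orbit H x \<subseteq> perm_orbit H x"
  proof
    fix z assume "z \<in> h ` perm_orbit H x"
    then obtain h' where h': "h' \<in> H" "z = h (h' x)" unfolding perm_orbit_def by blast
    have "h' \<in> carrier (Sym P)" using h'(1) subgroup.subset[OF H] by blast
    then have "(h \<otimes>\<^bsub>Sym P\<^esub> h') x = z" using BijGroup_mult_apply[OF hc _ x] h'(2) by simp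
    moreover have "h \<otimes>\<^bsub>Sym P\<^esub> h' \<in> H" using subgroup.m_closed[OF H h h'(1)] .
    ultimately show "z \<in> perm_orbit H x" unfolding perm_orbit_def by blast
  qed
  show "perm_orbit H x \<subseteq> h ` perm_orbit H x"
  proof
    fix z assume "z \<in> perm_orbit H x"
    then obtain h' where h': "h' \<in> H" "z = h' x" unfolding perm_orbit_def by blast
    have ih: "inv\<^bsub>Sym P\<^esub> h \<otimes>\<^bsub>Sym P\<^esub> h' \<in> H"
      using subgroup.m_closed[OF H subgroup.m_inv_closed[OF H h] h'(1)] .
    have h'c: "h' \<in> carrier (Sym P)" using h'(1) subgroup.subset[OF H] by blast
    have "(inv\<^bsub>Sym P\<^esub> h \<otimes>\<^bsub>Sym P\<^esub> h') x = (inv\<^bsub>Sym P\<^esub> h) z"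
      using BijGroup_mult_apply[OF Sym.inv_closed[OF hc] h'c x] h'(2) by simp
    then have "h ((inv\<^bsub>Sym P\<^esub> h \<otimes>\<^bsub>Sym P\<^esub> h') x) = z"
      using BijGroup_inv_apply(2)[OF hc] BijGroup_closed[OF h'c x] h'(2) by simp
    then show "z \<in> h ` perm_orbit H x" using ih unfolding perm_orbit_def by blast
  qed
qed

lemma perm_orbit_eq:
  assumes x: "x \<in> P" and z: "z \<in> perm_orbit H x"
  shows "perm_orbit H z = perm_orbit H x"
proof -
  obtain h where h: "h \<in> H" "z = h x" using z unfolding perm_orbit_def by blast
  have "perm_orbit H z = (\<lambda>h'. h' (h x)) ` H" unfolding perm_orbit_def h(2) ..
  also have "\<dots> = (\<lambda>h'. (h' \<otimes>\<^bsub>Sym P\<^esub> h) x) ` H"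
  proof (rule image_cong[OF refl])
    fix h' assume "h' \<in> H"
    then have "h' \<in> carrier (Sym P)" "h \<in> carrier (Sym P)" using h(1) subgroup.subset[OF H] by blast+
    then show "h' (h x) = (h' \<otimes>\<^bsub>Sym P\<^esub> h) x" using BijGroup_mult_apply x by metis
  qed
  also have "\<dots> = (\<lambda>h'. h' x) ` ((\<lambda>h'. h' \<otimes>\<^bsub>Sym P\<^esub> h) ` H)" by (simp add: image_image)
  also have "(\<lambda>h'. h' \<otimes>\<^bsub>Sym P\<^esub> h) ` H = H"
    using Sym.coset_join2[OF _ H h(1)] subgroup.subset[OF H] h(1)
    unfolding r_coset_def UNION_singleton_eq_range by blast
  finally show ?thesis unfolding perm_orbit_def .
qed

lemma perm_orbits_partition: "is_partition P (perm_orbit H ` P)"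
  unfolding is_partition_def
proof (intro conjI ballI impI)
  show "A \<noteq> {}" if "A \<in> perm_orbit H ` P" for A using that perm_orbit_self by blast
  show "\<Union> (perm_orbit H ` P) = P" using perm_orbit_self perm_orbit_subset by blast
  fix A B assume A: "A \<in> perm_orbit H ` P" and B: "B \<in> perm_orbit H ` P" and AB: "A \<noteq> B"
  obtain x y where xy: "x \<in> P" "A = perm_orbit H x" "y \<in> P" "B = perm_orbit H y" using A B by blast
  show "A \<inter> B = {}"
  proof (rule ccontr)
    assume "A \<inter> B \<noteq> {}"
    then obtain z where "z \<in> perm_orbit H x" "z \<in> perm_orbit H y" using xy by blast
    then have "perm_orbit H x = perm_orbit H y" using perm_orbit_eq xy(1,3) by metis
    then show False using AB xy by simp
  qed
qed

lemma perm_orbits_discrete_imp_trivial: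
  assumes "perm_orbit H ` P = (\<lambda>x. {x}) ` P"
  shows "H = {\<one>\<^bsub>Sym P\<^esub>}"
proof -
  have "h = \<one>\<^bsub>Sym P\<^esub>" if h: "h \<in> H" for h
  proof (rule BijGroup_eqI)
    show "h \<in> carrier (Sym P)" using h subgroup.subset[OF H] by blast
    fix x assume x: "x \<in> P"
    obtain y where "perm_orbit H x = {y}" using assms x by blast
    moreover have "x \<in> perm_orbit H x" "h x \<in> perm_orbit H x"
      using perm_orbit_self[OF x] h unfolding perm_orbit_def by auto
    ultimately show "h x = \<one>\<^bsub>Sym P\<^esub> x" using BijGroup_one_apply[OF x] by simp
  qed simp
  then show ?thesis using subgroup.one_closed[OF H] by blast
qed

lemma perm_orbits_single_imp_transitive:
  assumes "perm_orbit H ` P = {P}"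
  shows "transitive_on H P"
  unfolding transitive_on_def
proof (intro ballI)
  fix x y assume "x \<in> P" "y \<in> P"
  then have "y \<in> perm_orbit H x" using assms by blast
  then show "\<exists>h\<in>H. h x = y" unfolding perm_orbit_def by blast
qed

end

locale perm_group =
  fixes P :: "'a set" and G :: "('a \<Rightarrow> 'a) set"
  assumes finite_points: "finite P" and subgroup_G: "subgroup G (Sym P)"
begin

sublocale Sym: group "Sym P" by (rule group_BijGroup)

lemma G_carrier: "g \<in> G \<Longrightarrow> g \<in> carrier (Sym P)"
  using subgroup.subset[OF subgroup_G] by blast

lemma perm_orbit_conj:
  assumes H: "invariant_subgroup (Sym P) G H" and g: "g \<in> G" and x: "x \<in> P"
  shows "g ` perm_orbit H x = perm_orbit H (g x)"
proof -
  have gc: "g \<in> carrier (Sym P)" using G_carrier[OF g] .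
  have "g ` perm_orbit H x = (\<lambda>h. (g \<otimes>\<^bsub>Sym P\<^esub> h \<otimes>\<^bsub>Sym P\<^esub> inv\<^bsub>Sym P\<^esub> g) (g x)) ` H"
    unfolding perm_orbit_def image_image
    using BijGroup_conj_apply[OF gc _ BijGroup_closed[OF gc x]] BijGroup_inv_apply(1)[OF gc x]
      Sym.invariant_subgroupD(2)[OF H] by (intro image_cong) auto
  also have "\<dots> = (\<lambda>h. h (g x)) ` ((\<lambda>h. g \<otimes>\<^bsub>Sym P\<^esub> h \<otimes>\<^bsub>Sym P\<^esub> inv\<^bsub>Sym P\<^esub> g) ` H)"
    by (simp add: image_image)
  also have "(\<lambda>h. g \<otimes>\<^bsub>Sym P\<^esub> h \<otimes>\<^bsub>Sym P\<^esub> inv\<^bsub>Sym P\<^esub> g) ` H = H"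
  proof
    show "(\<lambda>h. g \<otimes>\<^bsub>Sym P\<^esub> h \<otimes>\<^bsub>Sym P\<^esub> inv\<^bsub>Sym P\<^esub> g) ` H \<subseteq> H"
      using Sym.invariant_subgroupD(4)[OF H g] by blast
    show "H \<subseteq> (\<lambda>h. g \<otimes>\<^bsub>Sym P\<^esub> h \<otimes>\<^bsub>Sym P\<^esub> inv\<^bsub>Sym P\<^esub> g) ` H"
    proof
      fix h assume h: "h \<in> H"
      have igG: "inv\<^bsub>Sym P\<^esub> g \<in> G" using subgroup.m_inv_closed[OF subgroup_G g] .
      have "inv\<^bsub>Sym P\<^esub> g \<otimes>\<^bsub>Sym P\<^esub> h \<otimes>\<^bsub>Sym P\<^esub> inv\<^bsub>Sym P\<^esub> (inv\<^bsub>Sym P\<^esub> g) \<in> H"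
        using Sym.invariant_subgroupD(4)[OF H igG h] .
      moreover have "h = g \<otimes>\<^bsub>Sym P\<^esub> (inv\<^bsub>Sym P\<^esub> g \<otimes>\<^bsub>Sym P\<^esub> h \<otimes>\<^bsub>Sym P\<^esub> inv\<^bsub>Sym P\<^esub> (inv\<^bsub>Sym P\<^esub> g)) \<otimes>\<^bsub>Sym P\<^esub> inv\<^bsub>Sym P\<^esub> g"
        using gc h Sym.invariant_subgroupD(2)[OF H] by (simp add: Sym.m_assoc subset_iff)
      ultimately show "h \<in> (\<lambda>h. g \<otimes>\<^bsub>Sym P\<^esub> h \<otimes>\<^bsub>Sym P\<^esub> inv\<^bsub>Sym P\<^esub> g) ` H" by blast
    qed
  qed
  finally show ?thesis unfolding perm_orbit_def .
qed

lemma perm_orbits_invariant: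
  assumes H: "invariant_subgroup (Sym P) G H"
  shows "invariant_partition P G (perm_orbit H ` P)"
  unfolding invariant_partition_def
proof (intro conjI ballI)
  show "is_partition P (perm_orbit H ` P)"
    using perm_orbits_partition Sym.invariant_subgroupD(1)[OF H] .
  fix g A assume g: "g \<in> G" and "A \<in> perm_orbit H ` P"
  then obtain x where x: "x \<in> P" "A = perm_orbit H x" by blast
  then have "g ` A = perm_orbit H (g x)" using perm_orbit_conj[OF H g] by simp
  then show "g ` A \<in> perm_orbit H ` P" using BijGroup_closed[OF G_carrier[OF g] x(1)] by blast
qed

lemma perm_orbits_normal:
  assumes N: "invariant_subgroup (Sym P) G N" "N \<subseteq> G"
  shows "normal_partition P G (perm_orbit N ` P)"
  unfolding normal_partition_def
proof (intro conjI ballI)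
  note N_sub = Sym.invariant_subgroupD(1)[OF N(1)]
  show "invariant_partition P G (perm_orbit N ` P)" using perm_orbits_invariant[OF N(1)] .
  fix A x z assume A: "A \<in> perm_orbit N ` P" and x: "x \<in> A" and z: "z \<in> A"
  obtain y where y: "y \<in> P" "A = perm_orbit N y" using A by blast
  have "perm_orbit N x = A" using perm_orbit_eq[OF N_sub y(1)] x y(2) by simp
  then obtain n where n: "n \<in> N" "n x = z" using z unfolding perm_orbit_def by blast
  have "n ` B = B" if "B \<in> perm_orbit N ` P" for B using that perm_orbit_image[OF N_sub n(1)] by blast
  then have "n \<in> kernel_on G (perm_orbit N ` P)" unfolding kernel_on_def using n(1) N(2) by blast
  then show "\<exists>g\<in>kernel_on G (perm_orbit N ` P). g x = z" using n(2) by blast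
qed

end

section \<open>Block systems\<close>

locale block_system = perm_group +
  fixes CC :: "'a set set"
  assumes CC_invariant: "invariant_partition P G CC"
begin

abbreviation Ker :: "('a \<Rightarrow> 'a) set" where "Ker \<equiv> kernel_on G CC"

lemma CC_partition: "is_partition P CC"
  using CC_invariant unfolding invariant_partition_def by blast

lemma class_subset: "C \<in> CC \<Longrightarrow> C \<subseteq> P"
  using CC_partition unfolding is_partition_def by blast

lemma class_nonempty: "C \<in> CC \<Longrightarrow> C \<noteq> {}"
  using CC_partition unfolding is_partition_def by blast

lemma class_unique: "C \<in> CC \<Longrightarrow> D \<in> CC \<Longrightarrow> x \<in> C \<Longrightarrow> x \<in> D \<Longrightarrow> C = D"
  using CC_partition unfolding is_partition_def by blast

lemma class_exists: "x \<in> P \<Longrightarrow> \<exists>C\<in>CC. x \<in> C"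
  using CC_partition unfolding is_partition_def by blast

lemma image_class: "g \<in> G \<Longrightarrow> C \<in> CC \<Longrightarrow> g ` C \<in> CC"
  using CC_invariant unfolding invariant_partition_def by blast

lemma finite_classes: "finite CC"
proof -
  have "CC \<subseteq> Pow P" using class_subset by blast
  then show ?thesis using finite_points by (simp add: finite_subset)
qed

lemma kernel_subset: "Ker \<subseteq> G"
  unfolding kernel_on_def by blast

lemma kernel_carrier: "k \<in> Ker \<Longrightarrow> k \<in> carrier (Sym P)"
  using kernel_subset G_carrier by blast

lemma kernel_image: "k \<in> Ker \<Longrightarrow> C \<in> CC \<Longrightarrow> k ` C = C"
  unfolding kernel_on_def by blast

lemma kernel_apply: "k \<in> Ker \<Longrightarrow> C \<in> CC \<Longrightarrow> x \<in> C \<Longrightarrow> k x \<in> C"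
  using kernel_image by blast

lemma kernel_memI:
  assumes f: "f \<in> G" and preserves: "\<And>C x. C \<in> CC \<Longrightarrow> x \<in> C \<Longrightarrow> f x \<in> C"
  shows "f \<in> Ker"
proof -
  have "f ` C = C" if C: "C \<in> CC" for C
  proof -
    obtain x where x: "x \<in> C" using class_nonempty[OF C] by blast
    have "f x \<in> f ` C" "f x \<in> C" using x preserves[OF C x] by auto
    then show ?thesis using class_unique[OF image_class[OF f C] C] by blast
  qed
  then show ?thesis using f unfolding kernel_on_def by blast
qed

lemma kernel_apply_inv:
  assumes k: "k \<in> Ker" and C: "C \<in> CC" and x: "x \<in> P" and kx: "k x \<in> C"
  shows "x \<in> C"
proof -
  obtain D where D: "D \<in> CC" "x \<in> D" using class_exists[OF x] by blast
  then show ?thesis using class_unique[OF C D(1) kx kernel_apply[OF k D]] by simp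
qed

abbreviation Stab :: "('a \<Rightarrow> 'a) set" where "Stab \<equiv> kernel_on (carrier (Sym P)) CC"

lemma Stab_image_Union:
  assumes "f \<in> Stab" "F \<subseteq> CC" shows "f ` \<Union>F = \<Union>F"
proof -
  have "f ` C = C" if "C \<in> F" for C using assms that unfolding kernel_on_def by blast
  then show ?thesis by (simp add: image_Union)
qed

lemma StabD: "f \<in> Stab \<Longrightarrow> f \<in> carrier (Sym P)" "f \<in> Stab \<Longrightarrow> C \<in> CC \<Longrightarrow> f ` C = C"
  unfolding kernel_on_def by blast+

lemma Stab_subgroup: "subgroup Stab (Sym P)"
proof (rule Sym.subgroupI)
  show "Stab \<subseteq> carrier (Sym P)" using StabD(1) by blast
  have "\<one>\<^bsub>Sym P\<^esub> ` C = C" if "C \<in> CC" for C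
    using class_subset[OF that] by (auto simp: BijGroup_def)
  then have "\<one>\<^bsub>Sym P\<^esub> \<in> Stab" unfolding kernel_on_def by simp
  then show "Stab \<noteq> {}" by blast
next
  fix a assume "a \<in> Stab"
  then show "inv\<^bsub>Sym P\<^esub> a \<in> Stab"
    unfolding kernel_on_def using inv_image_eq[OF class_subset] by simp
next
  fix a b assume "a \<in> Stab" "b \<in> Stab"
  then show "a \<otimes>\<^bsub>Sym P\<^esub> b \<in> Stab"
    unfolding kernel_on_def using mult_image_eq[OF class_subset] by simp
qed

lemma kernel_eq_Int_Stab: "Ker = G \<inter> Stab"
  unfolding kernel_on_def using G_carrier by blast

lemma kernel_subset_Stab: "Ker \<subseteq> Stab"
  unfolding kernel_eq_Int_Stab by blast

lemma kernel_subgroup: "subgroup Ker (Sym P)"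
  unfolding kernel_eq_Int_Stab using Sym.subgroups_Inter_pair[OF subgroup_G Stab_subgroup] .

lemma kernel_invariant: "invariant_subgroup (Sym P) G Ker"
  unfolding invariant_subgroup_def
proof (intro conjI ballI)
  show "subgroup Ker (Sym P)" by (rule kernel_subgroup)
  fix g k assume g: "g \<in> G" and k: "k \<in> Ker"
  have gc: "g \<in> carrier (Sym P)" using G_carrier[OF g] .
  show "g \<otimes>\<^bsub>Sym P\<^esub> k \<otimes>\<^bsub>Sym P\<^esub> inv\<^bsub>Sym P\<^esub> g \<in> Ker"
  proof (rule kernel_memI)
    show "g \<otimes>\<^bsub>Sym P\<^esub> k \<otimes>\<^bsub>Sym P\<^esub> inv\<^bsub>Sym P\<^esub> g \<in> G"
      using g k kernel_subset subgroup.m_closed[OF subgroup_G] subgroup.m_inv_closed[OF subgroup_G]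
      by blast
    fix C x assume C: "C \<in> CC" and x: "x \<in> C"
    have xP: "x \<in> P" using class_subset[OF C] x by blast
    define y where "y = (inv\<^bsub>Sym P\<^esub> g) x"
    have yP: "y \<in> P" unfolding y_def using BijGroup_closed[OF Sym.inv_closed[OF gc] xP] .
    obtain D where D: "D \<in> CC" "y \<in> D" using class_exists[OF yP] by blast
    have "x \<in> g ` D" using image_eqI[of x g y D] D(2) BijGroup_inv_apply(2)[OF gc xP] unfolding y_def by simp
    then have "g ` D = C" using class_unique[OF image_class[OF g D(1)] C _ x] by blast
    moreover have "(g \<otimes>\<^bsub>Sym P\<^esub> k \<otimes>\<^bsub>Sym P\<^esub> inv\<^bsub>Sym P\<^esub> g) x = g (k y)"
      unfolding y_def using BijGroup_conj_apply[OF gc kernel_carrier[OF k] xP] .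
    ultimately show "(g \<otimes>\<^bsub>Sym P\<^esub> k \<otimes>\<^bsub>Sym P\<^esub> inv\<^bsub>Sym P\<^esub> g) x \<in> C"
      using kernel_apply[OF k D] by blast
  qed
qed

lemma invariant_subgroup_kernel:
  "invariant_subgroup (Sym P) G H \<Longrightarrow> invariant_subgroup (Sym P) Ker H"
  unfolding invariant_subgroup_def using kernel_subset by blast

lemma kernel_invariant_kernel: "invariant_subgroup (Sym P) Ker Ker"
  using invariant_subgroup_kernel[OF kernel_invariant] .

lemma Stab_eqI:
  assumes f: "f \<in> Stab" and g: "g \<in> Stab"
    and restr: "\<And>C. C \<in> CC \<Longrightarrow> restrict_perm P C f = restrict_perm P C g"
  shows "f = g"
proof (rule BijGroup_eqI[OF StabD(1)[OF f] StabD(1)[OF g]])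
  fix x assume "x \<in> P"
  then obtain C where C: "C \<in> CC" "x \<in> C" using class_exists by blast
  then show "f x = g x" using restr[OF C(1)] restrict_perm_apply(1)[OF class_subset[OF C(1)] C(2)] by metis
qed

lemma restrict_perm_restrict_perm:
  assumes C: "C \<in> CC" and D: "D \<in> CC"
  shows "restrict_perm P D (restrict_perm P C a) = (if D = C then restrict_perm P C a else \<one>\<^bsub>Sym P\<^esub>)"
proof (cases "D = C")
  case True
  then show ?thesis by (intro ext) (simp add: restrict_perm_def)
next
  case False
  then have "x \<notin> C" if "x \<in> D" for x using that class_unique[OF C D] by blast
  then show ?thesis using False class_subset[OF D]
    by (intro ext) (auto simp: restrict_perm_def BijGroup_def)
qed

lemma restrict_perm_Stab:
  assumes C: "C \<in> CC" and a: "a \<in> Stab"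
  shows "restrict_perm P C a \<in> Stab"
proof -
  have "restrict_perm P C a ` D = D" if D: "D \<in> CC" for D
  proof (cases "D = C")
    case True
    then have "restrict_perm P C a ` D = a ` D" by (simp add: restrict_perm_def)
    then show ?thesis using StabD(2)[OF a D] by simp
  next
    case False
    then have "restrict_perm P C a x = x" if "x \<in> D" for x
      using that class_unique[OF C D] class_subset[OF D] restrict_perm_apply(2)[OF class_subset[OF C]] by blast
    then show ?thesis by simp
  qed
  moreover have "restrict_perm P C a \<in> carrier (Sym P)"
    using restrict_perm_carrier[OF class_subset[OF C] StabD(1)[OF a] StabD(2)[OF a C]] .
  ultimately show ?thesis unfolding kernel_on_def by blast
qed

lemma restrict_image_invariant:
  assumes C: "C \<in> CC" and T: "invariant_subgroup (Sym P) Ker T" and TS: "T \<subseteq> Stab"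
  shows "invariant_subgroup (Sym P) Ker (restrict_perm P C ` T)"
  unfolding invariant_subgroup_def
proof (intro conjI ballI)
  note T' = Sym.invariant_subgroupD[OF T] and D = class_subset[OF C]
  have Stab_C: "a \<in> carrier (Sym P)" "a ` C = C" if "a \<in> T" for a using StabD that TS C by blast+
  show "subgroup (restrict_perm P C ` T) (Sym P)"
  proof (rule Sym.subgroupI)
    show "restrict_perm P C ` T \<subseteq> carrier (Sym P)" using restrict_perm_carrier[OF D] Stab_C by blast
    show "restrict_perm P C ` T \<noteq> {}" using T'(3) by blast
  next
    fix u assume "u \<in> restrict_perm P C ` T"
    then obtain a where a: "a \<in> T" "u = restrict_perm P C a" by blast
    then have "inv\<^bsub>Sym P\<^esub> u = restrict_perm P C (inv\<^bsub>Sym P\<^esub> a)"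
      using restrict_perm_inv[OF D Stab_C[OF a(1)]] by simp
    then show "inv\<^bsub>Sym P\<^esub> u \<in> restrict_perm P C ` T" using subgroup.m_inv_closed[OF T'(1) a(1)] by blast
  next
    fix u v assume "u \<in> restrict_perm P C ` T" "v \<in> restrict_perm P C ` T"
    then obtain a b where ab: "a \<in> T" "u = restrict_perm P C a" "b \<in> T" "v = restrict_perm P C b" by blast
    then have "u \<otimes>\<^bsub>Sym P\<^esub> v = restrict_perm P C (a \<otimes>\<^bsub>Sym P\<^esub> b)"
      using restrict_perm_mult[OF D Stab_C[OF ab(1)] Stab_C[OF ab(3)]] by simp
    then show "u \<otimes>\<^bsub>Sym P\<^esub> v \<in> restrict_perm P C ` T" using subgroup.m_closed[OF T'(1) ab(1,3)] by blast
  qed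
  fix k u assume k: "k \<in> Ker" and "u \<in> restrict_perm P C ` T"
  then obtain a where a: "a \<in> T" "u = restrict_perm P C a" by blast
  have "k \<in> Stab" using k kernel_subset_Stab by blast
  then have "k \<otimes>\<^bsub>Sym P\<^esub> u \<otimes>\<^bsub>Sym P\<^esub> inv\<^bsub>Sym P\<^esub> k = restrict_perm P C (k \<otimes>\<^bsub>Sym P\<^esub> a \<otimes>\<^bsub>Sym P\<^esub> inv\<^bsub>Sym P\<^esub> k)"
    using restrict_perm_conj[OF D _ _ Stab_C[OF a(1)]] StabD C a(2) by blast
  then show "k \<otimes>\<^bsub>Sym P\<^esub> u \<otimes>\<^bsub>Sym P\<^esub> inv\<^bsub>Sym P\<^esub> k \<in> restrict_perm P C ` T" using T'(4)[OF k a(1)] by blast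
qed

lemma restrict_preimage_invariant:
  assumes C: "C \<in> CC" and T: "invariant_subgroup (Sym P) Ker T" and TS: "T \<subseteq> Stab"
    and T': "invariant_subgroup (Sym P) Ker T'"
  shows "invariant_subgroup (Sym P) Ker {a\<in>T. restrict_perm P C a \<in> T'}"
  unfolding invariant_subgroup_def
proof (intro conjI ballI)
  note T1 = Sym.invariant_subgroupD[OF T] and T2 = Sym.invariant_subgroupD[OF T'] and D = class_subset[OF C]
  have Stab_C: "a \<in> carrier (Sym P)" "a ` C = C" if "a \<in> T" for a using StabD that TS C by blast+
  show "subgroup {a\<in>T. restrict_perm P C a \<in> T'} (Sym P)"
  proof (rule Sym.subgroupI)
    show "{a\<in>T. restrict_perm P C a \<in> T'} \<subseteq> carrier (Sym P)" using T1(2) by blast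
    show "{a\<in>T. restrict_perm P C a \<in> T'} \<noteq> {}" using T1(3) T2(3) restrict_perm_one[OF D] by auto
  next
    fix a assume "a \<in> {a\<in>T. restrict_perm P C a \<in> T'}"
    then have a: "a \<in> T" "restrict_perm P C a \<in> T'" by blast+
    then have "restrict_perm P C (inv\<^bsub>Sym P\<^esub> a) \<in> T'"
      using restrict_perm_inv[OF D Stab_C[OF a(1)]] subgroup.m_inv_closed[OF T2(1)] by simp
    then show "inv\<^bsub>Sym P\<^esub> a \<in> {a\<in>T. restrict_perm P C a \<in> T'}"
      using subgroup.m_inv_closed[OF T1(1) a(1)] by blast
  next
    fix a b assume "a \<in> {a\<in>T. restrict_perm P C a \<in> T'}" "b \<in> {a\<in>T. restrict_perm P C a \<in> T'}"
    then have a: "a \<in> T" "restrict_perm P C a \<in> T'" and b: "b \<in> T" "restrict_perm P C b \<in> T'" by blast+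
    then have "restrict_perm P C (a \<otimes>\<^bsub>Sym P\<^esub> b) \<in> T'"
      using restrict_perm_mult[OF D Stab_C[OF a(1)] Stab_C[OF b(1)]] subgroup.m_closed[OF T2(1)] by simp
    then show "a \<otimes>\<^bsub>Sym P\<^esub> b \<in> {a\<in>T. restrict_perm P C a \<in> T'}"
      using subgroup.m_closed[OF T1(1) a(1) b(1)] by blast
  qed
  fix k a assume k: "k \<in> Ker" and "a \<in> {a\<in>T. restrict_perm P C a \<in> T'}"
  then have a: "a \<in> T" "restrict_perm P C a \<in> T'" by blast+
  have "k \<in> Stab" using k kernel_subset_Stab by blast
  then have "restrict_perm P C (k \<otimes>\<^bsub>Sym P\<^esub> a \<otimes>\<^bsub>Sym P\<^esub> inv\<^bsub>Sym P\<^esub> k)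
      = k \<otimes>\<^bsub>Sym P\<^esub> restrict_perm P C a \<otimes>\<^bsub>Sym P\<^esub> inv\<^bsub>Sym P\<^esub> k"
    using restrict_perm_conj[OF D _ _ Stab_C[OF a(1)]] StabD C by metis
  then show "k \<otimes>\<^bsub>Sym P\<^esub> a \<otimes>\<^bsub>Sym P\<^esub> inv\<^bsub>Sym P\<^esub> k \<in> {a\<in>T. restrict_perm P C a \<in> T'}"
    using T1(4)[OF k a(1)] T2(4)[OF k a(2)] by simp
qed

text \<open>A class-preserving permutation is the product of its restrictions to the classes.\<close>

lemma mem_subgroup_if_restrictions_mem:
  assumes H: "subgroup H (Sym P)" and f: "f \<in> Stab"
    and restr: "\<And>C. C \<in> CC \<Longrightarrow> restrict_perm P C f \<in> H"
  shows "f \<in> H"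
proof -
  have fc: "f \<in> carrier (Sym P)" using f unfolding kernel_on_def by blast
  have "F \<subseteq> CC \<longrightarrow> restrict_perm P (\<Union>F) f \<in> H" if "finite F" for F
    using that
  proof (induction F rule: finite_induct)
    case empty
    have "restrict_perm P {} f = \<one>\<^bsub>Sym P\<^esub>" unfolding restrict_perm_def by (simp add: BijGroup_def restrict_def)
    then show ?case using subgroup.one_closed[OF H] by simp
  next
    case (insert C F)
    show ?case
    proof
      assume CF: "insert C F \<subseteq> CC"
      have disj: "C \<inter> \<Union>F = {}"
        using CF insert.hyps(2) class_unique by blast
      have sub: "C \<subseteq> P" "\<Union>F \<subseteq> P" using CF class_subset by blast+
      have "restrict_perm P (\<Union>(insert C F)) f = restrict_perm P C f \<otimes>\<^bsub>Sym P\<^esub> restrict_perm P (\<Union>F) f"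
        using restrict_perm_Un[OF sub disj fc] Stab_image_Union[OF f, of "{C}"] Stab_image_Union[OF f, of F] CF
        by simp
      then show "restrict_perm P (\<Union>(insert C F)) f \<in> H"
        using subgroup.m_closed[OF H restr] insert.IH CF by simp
    qed
  qed
  then have "restrict_perm P (\<Union>CC) f \<in> H" using finite_classes by blast
  moreover have "\<Union>CC = P" using CC_partition unfolding is_partition_def by blast
  ultimately show ?thesis using restrict_perm_all[OF fc] by simp
qed

end

section \<open>Minimal normal block systems\<close>

locale minimal_normal_block_system = block_system +
  assumes CC_nontrivial: "nontrivial_partition P CC"
    and CC_normal: "normal_partition P G CC"
    and CC_minimal: "minimal_partition P G CC"
begin

abbreviation Soc :: "('a \<Rightarrow> 'a) set" where "Soc \<equiv> invariant_socle (Sym P) Ker Ker"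

lemma class_with_two_points: "\<exists>C\<in>CC. \<exists>x\<in>C. \<exists>y\<in>C. x \<noteq> y"
proof (rule ccontr)
  assume "\<not> ?thesis"
  then have single: "C = {x}" if "C \<in> CC" "x \<in> C" for C x using that by blast
  have "CC = (\<lambda>x. {x}) ` P"
  proof
    show "CC \<subseteq> (\<lambda>x. {x}) ` P"
    proof
      fix C assume C: "C \<in> CC"
      then obtain x where x: "x \<in> C" using class_nonempty by blast
      then show "C \<in> (\<lambda>x. {x}) ` P" using single[OF C x] class_subset[OF C] by blast
    qed
    show "(\<lambda>x. {x}) ` P \<subseteq> CC"
    proof
      fix A assume "A \<in> (\<lambda>x. {x}) ` P"
      then obtain x where x: "x \<in> P" "A = {x}" by blast
      then obtain C where C: "C \<in> CC" "x \<in> C" using class_exists by blast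
      then show "A \<in> CC" using single[OF C] x(2) by simp
    qed
  qed
  then show False using CC_nontrivial unfolding nontrivial_partition_def by blast
qed

lemma class_ne_points:
  assumes C: "C \<in> CC" shows "C \<noteq> P"
proof
  assume CP: "C = P"
  have "D = P" if D: "D \<in> CC" for D
  proof -
    obtain y where y: "y \<in> D" using class_nonempty[OF D] by blast
    then have "y \<in> C" using class_subset[OF D] CP by blast
    then show ?thesis using class_unique[OF D C y] CP by simp
  qed
  then have "CC = {P}" using C CP by blast
  then show False using CC_nontrivial unfolding nontrivial_partition_def by blast
qed

lemma kernel_transitive: "C \<in> CC \<Longrightarrow> x \<in> C \<Longrightarrow> y \<in> C \<Longrightarrow> \<exists>k\<in>Ker. k x = y"
  using CC_normal unfolding normal_partition_def by blast

lemma kernel_nontrivial: "Ker \<noteq> {\<one>\<^bsub>Sym P\<^esub>}"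
proof
  assume Ker1: "Ker = {\<one>\<^bsub>Sym P\<^esub>}"
  obtain C x y where C: "C \<in> CC" "x \<in> C" "y \<in> C" "x \<noteq> y" using class_with_two_points by blast
  obtain k where "k \<in> Ker" "k x = y" using kernel_transitive C by blast
  moreover have "x \<in> P" using class_subset C by blast
  ultimately show False using Ker1 BijGroup_one_apply[of x P] C(4) by simp
qed

lemma refinement_eq_CC:
  assumes D: "invariant_partition P G D" "refines D CC" "D \<noteq> (\<lambda>x. {x}) ` P"
  shows "D = CC"
proof -
  have "D \<noteq> {P}"
  proof
    assume "D = {P}"
    then obtain C where "C \<in> CC" "P \<subseteq> C" using D(2) unfolding refines_def by blast
    then show False using class_ne_points class_subset by blast
  qed
  then have "nontrivial_partition P D"
    using D unfolding nontrivial_partition_def invariant_partition_def by blast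
  then show ?thesis using CC_minimal D unfolding minimal_partition_def by blast
qed

lemma coarsening_eq_CC:
  assumes max: "maximal_partition P G CC"
    and D: "invariant_partition P G D" "refines CC D" "D \<noteq> {P}"
  shows "D = CC"
proof -
  have "D \<noteq> (\<lambda>x. {x}) ` P"
  proof
    assume discrete: "D = (\<lambda>x. {x}) ` P"
    obtain C x y where C: "C \<in> CC" "x \<in> C" "y \<in> C" "x \<noteq> y" using class_with_two_points by blast
    then obtain A where "A \<in> D" "C \<subseteq> A" using D(2) unfolding refines_def by blast
    then show False using discrete C by blast
  qed
  then have "nontrivial_partition P D"
    using D unfolding nontrivial_partition_def invariant_partition_def by blast
  then show ?thesis using max D unfolding maximal_partition_def by blast
qed

lemma normal_in_kernel_trivial_or_transitive:
  assumes H: "invariant_subgroup (Sym P) G H" and HK: "H \<subseteq> Ker"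
  shows "H = {\<one>\<^bsub>Sym P\<^esub>} \<or> (\<forall>C\<in>CC. \<forall>x\<in>C. \<forall>y\<in>C. \<exists>h\<in>H. h x = y)"
proof (cases "perm_orbit H ` P = (\<lambda>x. {x}) ` P")
  case True
  then show ?thesis using perm_orbits_discrete_imp_trivial Sym.invariant_subgroupD(1)[OF H] by blast
next
  case False
  have H_sub: "subgroup H (Sym P)" using Sym.invariant_subgroupD(1)[OF H] .
  have "refines (perm_orbit H ` P) CC"
    unfolding refines_def
  proof
    fix A assume "A \<in> perm_orbit H ` P"
    then obtain x where x: "x \<in> P" "A = perm_orbit H x" by blast
    obtain C where C: "C \<in> CC" "x \<in> C" using class_exists[OF x(1)] by blast
    have "A \<subseteq> C" unfolding x(2) perm_orbit_def using kernel_apply[OF _ C(1) C(2)] HK by blast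
    then show "\<exists>B\<in>CC. A \<subseteq> B" using C(1) by blast
  qed
  then have orbits: "perm_orbit H ` P = CC"
    using refinement_eq_CC[OF perm_orbits_invariant[OF H]] False by blast
  have "\<exists>h\<in>H. h x = y" if C: "C \<in> CC" and x: "x \<in> C" and y: "y \<in> C" for C x y
  proof -
    have xP: "x \<in> P" using class_subset[OF C] x by blast
    have "perm_orbit H x = C"
      using class_unique[of "perm_orbit H x" C x] orbits xP C x perm_orbit_self[OF H_sub xP] by blast
    then show ?thesis using y unfolding perm_orbit_def by blast
  qed
  then show ?thesis by blast
qed

text \<open>An abelian group acting transitively on a class is regular there, so anything commuting
  with it is determined on the class by a single point.\<close>

lemma agrees_with_transitive_abelian:
  assumes A: "A \<subseteq> Ker" and A_comm: "\<And>a b. a \<in> A \<Longrightarrow> b \<in> A \<Longrightarrow> a \<otimes>\<^bsub>Sym P\<^esub> b = b \<otimes>\<^bsub>Sym P\<^esub> a"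
    and C: "C \<in> CC" and trans: "\<And>x y. x \<in> C \<Longrightarrow> y \<in> C \<Longrightarrow> \<exists>a\<in>A. a x = y"
    and f: "f \<in> Ker" and f_comm: "\<And>a. a \<in> A \<Longrightarrow> f \<otimes>\<^bsub>Sym P\<^esub> a = a \<otimes>\<^bsub>Sym P\<^esub> f"
  shows "\<exists>a\<in>A. \<forall>x\<in>C. f x = a x"
proof -
  obtain x0 where x0: "x0 \<in> C" using class_nonempty[OF C] by blast
  have x0P: "x0 \<in> P" using class_subset[OF C] x0 by blast
  obtain a where a: "a \<in> A" "a x0 = f x0" using trans[OF x0 kernel_apply[OF f C x0]] by blast
  have fc: "f \<in> carrier (Sym P)" and ac: "a \<in> carrier (Sym P)" using f a(1) A kernel_carrier by blast+
  have "f y = a y" if y: "y \<in> C" for y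
  proof -
    obtain b where b: "b \<in> A" "b x0 = y" using trans[OF x0 y] by blast
    have bc: "b \<in> carrier (Sym P)" using b(1) A kernel_carrier by blast
    have "f y = (f \<otimes>\<^bsub>Sym P\<^esub> b) x0" using BijGroup_mult_apply[OF fc bc x0P] b(2) by simp
    also have "\<dots> = (b \<otimes>\<^bsub>Sym P\<^esub> f) x0" using f_comm[OF b(1)] by simp
    also have "\<dots> = b (a x0)" using BijGroup_mult_apply[OF bc fc x0P] a(2) by simp
    also have "\<dots> = (b \<otimes>\<^bsub>Sym P\<^esub> a) x0" using BijGroup_mult_apply[OF bc ac x0P] by simp
    also have "\<dots> = (a \<otimes>\<^bsub>Sym P\<^esub> b) x0" using A_comm[OF b(1) a(1)] by simp
    also have "\<dots> = a y" using BijGroup_mult_apply[OF ac bc x0P] b(2) by simp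
    finally show ?thesis .
  qed
  then show ?thesis using a(1) by blast
qed

lemma abelian_if_classwise_abelian:
  assumes H: "H \<subseteq> Ker" and Z: "Z \<subseteq> Ker"
    and Z_comm: "\<And>a b. a \<in> Z \<Longrightarrow> b \<in> Z \<Longrightarrow> a \<otimes>\<^bsub>Sym P\<^esub> b = b \<otimes>\<^bsub>Sym P\<^esub> a"
    and agree: "\<And>h C. h \<in> H \<Longrightarrow> C \<in> CC \<Longrightarrow> \<exists>z\<in>Z. \<forall>x\<in>C. h x = z x"
    and h1: "h1 \<in> H" and h2: "h2 \<in> H"
  shows "h1 \<otimes>\<^bsub>Sym P\<^esub> h2 = h2 \<otimes>\<^bsub>Sym P\<^esub> h1"
proof -
  have c1: "h1 \<in> carrier (Sym P)" and c2: "h2 \<in> carrier (Sym P)" using h1 h2 H kernel_carrier by blast+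
  show ?thesis
  proof (rule BijGroup_eqI[OF Sym.m_closed[OF c1 c2] Sym.m_closed[OF c2 c1]])
    fix x assume x: "x \<in> P"
    obtain C where C: "C \<in> CC" "x \<in> C" using class_exists[OF x] by blast
    obtain z1 where z1: "z1 \<in> Z" "\<forall>x\<in>C. h1 x = z1 x" using agree[OF h1 C(1)] by blast
    obtain z2 where z2: "z2 \<in> Z" "\<forall>x\<in>C. h2 x = z2 x" using agree[OF h2 C(1)] by blast
    have z1K: "z1 \<in> Ker" and z2K: "z2 \<in> Ker" using z1(1) z2(1) Z by blast+
    have zc1: "z1 \<in> carrier (Sym P)" and zc2: "z2 \<in> carrier (Sym P)" using z1K z2K kernel_carrier by blast+
    have "(h1 \<otimes>\<^bsub>Sym P\<^esub> h2) x = h1 (h2 x)" using BijGroup_mult_apply[OF c1 c2 x] .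
    also have "\<dots> = z1 (z2 x)" using z1(2) z2(2) C(2) kernel_apply[OF z2K C(1) C(2)] by simp
    also have "\<dots> = (z1 \<otimes>\<^bsub>Sym P\<^esub> z2) x" using BijGroup_mult_apply[OF zc1 zc2 x] by simp
    also have "\<dots> = (z2 \<otimes>\<^bsub>Sym P\<^esub> z1) x" using Z_comm[OF z1(1) z2(1)] by simp
    also have "\<dots> = z2 (z1 x)" using BijGroup_mult_apply[OF zc2 zc1 x] by simp
    also have "\<dots> = h2 (h1 x)" using z1(2) z2(2) C(2) kernel_apply[OF z1K C(1) C(2)] by simp
    also have "\<dots> = (h2 \<otimes>\<^bsub>Sym P\<^esub> h1) x" using BijGroup_mult_apply[OF c2 c1 x] by simp
    finally show "(h1 \<otimes>\<^bsub>Sym P\<^esub> h2) x = (h2 \<otimes>\<^bsub>Sym P\<^esub> h1) x" .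
  qed
qed

lemma pow_agrees:
  assumes f: "f \<in> carrier (Sym P)" and z: "z \<in> Ker" and C: "C \<in> CC" and agree: "\<forall>x\<in>C. f x = z x"
  shows "\<forall>x\<in>C. (f [^]\<^bsub>Sym P\<^esub> (n::nat)) x = (z [^]\<^bsub>Sym P\<^esub> n) x"
proof (induction n)
  case 0 then show ?case by simp
next
  case (Suc n)
  have zc: "z \<in> carrier (Sym P)" using kernel_carrier[OF z] .
  show ?case
  proof
    fix x assume x: "x \<in> C"
    have xP: "x \<in> P" using class_subset[OF C] x by blast
    have "(f [^]\<^bsub>Sym P\<^esub> Suc n) x = (f [^]\<^bsub>Sym P\<^esub> n) (f x)"
      using BijGroup_mult_apply[OF Sym.nat_pow_closed[OF f] f xP] by simp
    also have "\<dots> = (z [^]\<^bsub>Sym P\<^esub> n) (z x)" using agree x Suc kernel_apply[OF z C x] by simp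
    also have "\<dots> = (z [^]\<^bsub>Sym P\<^esub> Suc n) x"
      using BijGroup_mult_apply[OF Sym.nat_pow_closed[OF zc] zc xP] by simp
    finally show "(f [^]\<^bsub>Sym P\<^esub> Suc n) x = (z [^]\<^bsub>Sym P\<^esub> Suc n) x" .
  qed
qed

lemma socle_subset_kernel: "Soc \<subseteq> Ker"
  using Sym.invariant_socle_subset[OF kernel_subgroup] .

lemma socle_invariant: "invariant_subgroup (Sym P) G Soc"
  unfolding invariant_socle_def
proof (rule Sym.invariant_subgroup_generate)
  show "G \<subseteq> carrier (Sym P)" using G_carrier by blast
  show "\<Union>{T. minimal_invariant (Sym P) Ker Ker T} \<subseteq> carrier (Sym P)"
    using kernel_carrier Sym.minimal_invariantD(2) by blast
  fix g h assume g: "g \<in> G" and "h \<in> \<Union>{T. minimal_invariant (Sym P) Ker Ker T}"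
  then obtain T where T: "minimal_invariant (Sym P) Ker Ker T" "h \<in> T" by blast
  have gc: "g \<in> carrier (Sym P)" using G_carrier[OF g] .
  have ig: "inv\<^bsub>Sym P\<^esub> g \<in> G" using subgroup.m_inv_closed[OF subgroup_G g] .
  have "minimal_invariant (Sym P) Ker Ker ((\<lambda>m. g \<otimes>\<^bsub>Sym P\<^esub> m \<otimes>\<^bsub>Sym P\<^esub> inv\<^bsub>Sym P\<^esub> g) ` T)"
  proof (rule Sym.minimal_invariant_conj[OF gc _ _ _ T(1)])
    show "Ker \<subseteq> carrier (Sym P)" using kernel_carrier by blast
    show "g \<otimes>\<^bsub>Sym P\<^esub> k \<otimes>\<^bsub>Sym P\<^esub> inv\<^bsub>Sym P\<^esub> g \<in> Ker" if "k \<in> Ker" for k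
      using Sym.invariant_subgroupD(4)[OF kernel_invariant g that] .
    show "inv\<^bsub>Sym P\<^esub> g \<otimes>\<^bsub>Sym P\<^esub> k \<otimes>\<^bsub>Sym P\<^esub> g \<in> Ker" if "k \<in> Ker" for k
      using Sym.invariant_subgroupD(4)[OF kernel_invariant ig that] gc by simp
  qed
  then show "g \<otimes>\<^bsub>Sym P\<^esub> h \<otimes>\<^bsub>Sym P\<^esub> inv\<^bsub>Sym P\<^esub> g \<in> \<Union>{T. minimal_invariant (Sym P) Ker Ker T}"
    using T(2) by blast
qed

lemma socle_nontrivial: "Soc \<noteq> {\<one>\<^bsub>Sym P\<^esub>}"
  using Sym.invariant_socle_nontrivial[OF finite_BijGroup[OF finite_points] kernel_invariant_kernel
      kernel_nontrivial] .

lemma abelian_invariant_prime_exponent: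
  assumes A: "invariant_subgroup (Sym P) G A" and AK: "A \<subseteq> Ker"
    and A_comm: "\<And>a b. a \<in> A \<Longrightarrow> b \<in> A \<Longrightarrow> a \<otimes>\<^bsub>Sym P\<^esub> b = b \<otimes>\<^bsub>Sym P\<^esub> a"
    and nt: "A \<noteq> {\<one>\<^bsub>Sym P\<^esub>}"
  shows "\<exists>p::nat. Factorial_Ring.prime p \<and> (\<forall>x\<in>A. x [^]\<^bsub>Sym P\<^esub> p = \<one>\<^bsub>Sym P\<^esub>)"
proof -
  note A' = Sym.invariant_subgroupD[OF A]
  obtain a where a: "a \<in> A" "a \<noteq> \<one>\<^bsub>Sym P\<^esub>" using nt A'(3) by blast
  obtain p :: nat and b where p: "Factorial_Ring.prime p" and b: "b \<in> A" "b \<noteq> \<one>\<^bsub>Sym P\<^esub>" "b [^]\<^bsub>Sym P\<^esub> p = \<one>\<^bsub>Sym P\<^esub>"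
    using Sym.exists_prime_order_element[OF finite_BijGroup[OF finite_points] A'(1) a] by metis
  define Ap where "Ap = {x\<in>A. x [^]\<^bsub>Sym P\<^esub> p = \<one>\<^bsub>Sym P\<^esub>}"
  have Ap_inv: "invariant_subgroup (Sym P) G Ap"
    unfolding Ap_def using Sym.torsion_invariant[OF _ A A_comm] G_carrier by blast
  have ApK: "Ap \<subseteq> Ker" unfolding Ap_def using AK by blast
  have "Ap \<noteq> {\<one>\<^bsub>Sym P\<^esub>}" using b unfolding Ap_def by blast
  then have trans: "\<forall>C\<in>CC. \<forall>x\<in>C. \<forall>y\<in>C. \<exists>h\<in>Ap. h x = y"
    using normal_in_kernel_trivial_or_transitive[OF Ap_inv ApK] by blast
  have "y [^]\<^bsub>Sym P\<^esub> p = \<one>\<^bsub>Sym P\<^esub>" if y: "y \<in> A" for y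
  proof (rule BijGroup_eqI)
    have yc: "y \<in> carrier (Sym P)" using y A'(2) by blast
    show "y [^]\<^bsub>Sym P\<^esub> p \<in> carrier (Sym P)" using Sym.nat_pow_closed[OF yc] .
    fix x assume x: "x \<in> P"
    obtain C where C: "C \<in> CC" "x \<in> C" using class_exists[OF x] by blast
    have "\<exists>z\<in>Ap. \<forall>x\<in>C. y x = z x"
      using agrees_with_transitive_abelian[OF ApK _ C(1) _ _, of y] A_comm y AK trans C(1)
      unfolding Ap_def by blast
    then obtain z where z: "z \<in> Ap" "\<forall>x\<in>C. y x = z x" by blast
    have "(y [^]\<^bsub>Sym P\<^esub> p) x = (z [^]\<^bsub>Sym P\<^esub> p) x"
      using pow_agrees[OF yc _ C(1) z(2)] z(1) ApK C(2) by blast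
    also have "\<dots> = \<one>\<^bsub>Sym P\<^esub> x" using z(1) unfolding Ap_def by simp
    finally show "(y [^]\<^bsub>Sym P\<^esub> p) x = \<one>\<^bsub>Sym P\<^esub> x" .
  qed simp
  then show ?thesis using p by blast
qed

definition socle_product :: "('a \<Rightarrow> 'a) set" where
  "socle_product = {f \<in> Stab. \<forall>C\<in>CC. \<exists>s\<in>Soc. restrict_perm P C f = restrict_perm P C s}"

lemma socle_productD:
  "f \<in> socle_product \<Longrightarrow> f \<in> Stab"
  "f \<in> socle_product \<Longrightarrow> C \<in> CC \<Longrightarrow> \<exists>s\<in>Soc. restrict_perm P C f = restrict_perm P C s"
  unfolding socle_product_def by blast+

lemma socle_subset_Stab: "Soc \<subseteq> Stab"
  using socle_subset_kernel kernel_subset_Stab by blast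

lemma socle_product_subgroup: "subgroup socle_product (Sym P)"
proof (rule Sym.subgroupI)
  note Soc_sub = Sym.invariant_subgroupD(1)[OF socle_invariant]
  show "socle_product \<subseteq> carrier (Sym P)" using socle_productD(1) StabD(1) by blast
  have "\<one>\<^bsub>Sym P\<^esub> \<in> socle_product"
    unfolding socle_product_def using subgroup.one_closed[OF Stab_subgroup] subgroup.one_closed[OF Soc_sub]
    by blast
  then show "socle_product \<noteq> {}" by blast
next
  fix f assume f: "f \<in> socle_product"
  note Soc_sub = Sym.invariant_subgroupD(1)[OF socle_invariant]
  have "\<exists>s\<in>Soc. restrict_perm P C (inv\<^bsub>Sym P\<^esub> f) = restrict_perm P C s" if C: "C \<in> CC" for C
  proof -
    obtain s where s: "s \<in> Soc" "restrict_perm P C f = restrict_perm P C s" using socle_productD(2)[OF f C] by blast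
    have "s \<in> Stab" using s(1) socle_subset_Stab by blast
    then have "restrict_perm P C (inv\<^bsub>Sym P\<^esub> s) = restrict_perm P C (inv\<^bsub>Sym P\<^esub> f)"
      using restrict_perm_inv[OF class_subset[OF C]] StabD[OF socle_productD(1)[OF f]] StabD s(2) C by metis
    then show ?thesis using subgroup.m_inv_closed[OF Soc_sub s(1)] by metis
  qed
  then show "inv\<^bsub>Sym P\<^esub> f \<in> socle_product"
    unfolding socle_product_def using subgroup.m_inv_closed[OF Stab_subgroup socle_productD(1)[OF f]] by blast
next
  fix f g assume f: "f \<in> socle_product" and g: "g \<in> socle_product"
  note Soc_sub = Sym.invariant_subgroupD(1)[OF socle_invariant]
  have "\<exists>s\<in>Soc. restrict_perm P C (f \<otimes>\<^bsub>Sym P\<^esub> g) = restrict_perm P C s" if C: "C \<in> CC" for C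
  proof -
    obtain s where s: "s \<in> Soc" "restrict_perm P C f = restrict_perm P C s" using socle_productD(2)[OF f C] by blast
    obtain t where t: "t \<in> Soc" "restrict_perm P C g = restrict_perm P C t" using socle_productD(2)[OF g C] by blast
    have st: "s \<in> Stab" "t \<in> Stab" using s(1) t(1) socle_subset_Stab by blast+
    have "restrict_perm P C (f \<otimes>\<^bsub>Sym P\<^esub> g) = restrict_perm P C f \<otimes>\<^bsub>Sym P\<^esub> restrict_perm P C g"
      using restrict_perm_mult[OF class_subset[OF C]] StabD[OF socle_productD(1)[OF f]]
        StabD[OF socle_productD(1)[OF g]] C by blast
    also have "\<dots> = restrict_perm P C (s \<otimes>\<^bsub>Sym P\<^esub> t)"
      using restrict_perm_mult[OF class_subset[OF C]] StabD[OF st(1)] StabD[OF st(2)] C s(2) t(2) by metis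
    finally show ?thesis using subgroup.m_closed[OF Soc_sub s(1) t(1)] by blast
  qed
  then show "f \<otimes>\<^bsub>Sym P\<^esub> g \<in> socle_product"
    unfolding socle_product_def
    using subgroup.m_closed[OF Stab_subgroup socle_productD(1)[OF f] socle_productD(1)[OF g]] by blast
qed

lemma socle_product_invariant: "invariant_subgroup (Sym P) Ker socle_product"
  unfolding invariant_subgroup_def
proof (intro conjI ballI)
  show "subgroup socle_product (Sym P)" by (rule socle_product_subgroup)
  fix k f assume k: "k \<in> Ker" and f: "f \<in> socle_product"
  have kS: "k \<in> Stab" using k kernel_subset_Stab by blast
  have "\<exists>s\<in>Soc. restrict_perm P C (k \<otimes>\<^bsub>Sym P\<^esub> f \<otimes>\<^bsub>Sym P\<^esub> inv\<^bsub>Sym P\<^esub> k) = restrict_perm P C s"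
    if C: "C \<in> CC" for C
  proof -
    obtain s where s: "s \<in> Soc" "restrict_perm P C f = restrict_perm P C s" using socle_productD(2)[OF f C] by blast
    have sS: "s \<in> Stab" using s(1) socle_subset_Stab by blast
    have "restrict_perm P C (k \<otimes>\<^bsub>Sym P\<^esub> f \<otimes>\<^bsub>Sym P\<^esub> inv\<^bsub>Sym P\<^esub> k)
        = k \<otimes>\<^bsub>Sym P\<^esub> restrict_perm P C f \<otimes>\<^bsub>Sym P\<^esub> inv\<^bsub>Sym P\<^esub> k"
      using restrict_perm_conj[OF class_subset[OF C]] StabD[OF kS] StabD[OF socle_productD(1)[OF f]] C
      by metis
    also have "\<dots> = restrict_perm P C (k \<otimes>\<^bsub>Sym P\<^esub> s \<otimes>\<^bsub>Sym P\<^esub> inv\<^bsub>Sym P\<^esub> k)"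
      unfolding s(2) using restrict_perm_conj[OF class_subset[OF C]] StabD[OF kS] StabD[OF sS] C by metis
    finally show ?thesis
      using Sym.invariant_subgroupD(4)[OF invariant_subgroup_kernel[OF socle_invariant] k s(1)] by blast
  qed
  moreover have "k \<otimes>\<^bsub>Sym P\<^esub> f \<otimes>\<^bsub>Sym P\<^esub> inv\<^bsub>Sym P\<^esub> k \<in> Stab"
    using kS socle_productD(1)[OF f] subgroup.m_closed[OF Stab_subgroup] subgroup.m_inv_closed[OF Stab_subgroup]
    by blast
  ultimately show "k \<otimes>\<^bsub>Sym P\<^esub> f \<otimes>\<^bsub>Sym P\<^esub> inv\<^bsub>Sym P\<^esub> k \<in> socle_product"
    unfolding socle_product_def by blast
qed

lemma socle_product_comm:
  assumes Soc_comm: "\<And>a b. a \<in> Soc \<Longrightarrow> b \<in> Soc \<Longrightarrow> a \<otimes>\<^bsub>Sym P\<^esub> b = b \<otimes>\<^bsub>Sym P\<^esub> a"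
    and f: "f \<in> socle_product" and g: "g \<in> socle_product"
  shows "f \<otimes>\<^bsub>Sym P\<^esub> g = g \<otimes>\<^bsub>Sym P\<^esub> f"
proof (rule Stab_eqI)
  note fS = socle_productD(1)[OF f] and gS = socle_productD(1)[OF g]
  show "f \<otimes>\<^bsub>Sym P\<^esub> g \<in> Stab" "g \<otimes>\<^bsub>Sym P\<^esub> f \<in> Stab"
    using subgroup.m_closed[OF Stab_subgroup] fS gS by blast+
  fix C assume C: "C \<in> CC"
  obtain s where s: "s \<in> Soc" "restrict_perm P C f = restrict_perm P C s" using socle_productD(2)[OF f C] by blast
  obtain t where t: "t \<in> Soc" "restrict_perm P C g = restrict_perm P C t" using socle_productD(2)[OF g C] by blast
  have st: "s \<in> Stab" "t \<in> Stab" using s(1) t(1) socle_subset_Stab by blast+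
  note mult = restrict_perm_mult[OF class_subset[OF C]]
  have "restrict_perm P C (f \<otimes>\<^bsub>Sym P\<^esub> g) = restrict_perm P C (s \<otimes>\<^bsub>Sym P\<^esub> t)"
    using mult StabD[OF fS] StabD[OF gS] StabD[OF st(1)] StabD[OF st(2)] C s(2) t(2) by metis
  also have "\<dots> = restrict_perm P C (t \<otimes>\<^bsub>Sym P\<^esub> s)" using Soc_comm[OF s(1) t(1)] by simp
  also have "\<dots> = restrict_perm P C (g \<otimes>\<^bsub>Sym P\<^esub> f)"
    using mult StabD[OF fS] StabD[OF gS] StabD[OF st(1)] StabD[OF st(2)] C s(2) t(2) by metis
  finally show "restrict_perm P C (f \<otimes>\<^bsub>Sym P\<^esub> g) = restrict_perm P C (g \<otimes>\<^bsub>Sym P\<^esub> f)" .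
qed

lemma restrict_minimal_invariant:
  assumes T: "minimal_invariant (Sym P) Ker Ker T" and C: "C \<in> CC"
    and nt: "restrict_perm P C ` T \<noteq> {\<one>\<^bsub>Sym P\<^esub>}"
  shows "minimal_invariant (Sym P) Ker socle_product (restrict_perm P C ` T)"
  unfolding minimal_invariant_def
proof (intro conjI allI impI)
  note T_inv = Sym.minimal_invariantD(1)[OF T]
  have TS: "T \<subseteq> Stab" using Sym.minimal_invariantD(2)[OF T] kernel_subset_Stab by blast
  show "invariant_subgroup (Sym P) Ker (restrict_perm P C ` T)"
    using restrict_image_invariant[OF C T_inv TS] .
  show "restrict_perm P C ` T \<noteq> {\<one>\<^bsub>Sym P\<^esub>}" by (rule nt)
  show "restrict_perm P C ` T \<subseteq> socle_product"
  proof
    fix u assume "u \<in> restrict_perm P C ` T"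
    then obtain a where a: "a \<in> T" "u = restrict_perm P C a" by blast
    have aSoc: "a \<in> Soc" using a(1) Sym.minimal_invariant_subset_socle[OF T] by blast
    have oneSoc: "\<one>\<^bsub>Sym P\<^esub> \<in> Soc" using Sym.invariant_subgroupD(3)[OF socle_invariant] .
    have "\<exists>s\<in>Soc. restrict_perm P D u = restrict_perm P D s" if D: "D \<in> CC" for D
    proof (cases "D = C")
      case True
      then show ?thesis using restrict_perm_restrict_perm[OF C D] a(2) aSoc by auto
    next
      case False
      then have "restrict_perm P D u = restrict_perm P D \<one>\<^bsub>Sym P\<^esub>"
        using restrict_perm_restrict_perm[OF C D] restrict_perm_one[OF class_subset[OF D]] a(2) by simp
      then show ?thesis using oneSoc by blast
    qed
    then show "u \<in> socle_product"
      unfolding socle_product_def using restrict_perm_Stab[OF C] a TS by blast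
  qed
  fix T' assume T': "invariant_subgroup (Sym P) Ker T'" "T' \<noteq> {\<one>\<^bsub>Sym P\<^esub>}" "T' \<subseteq> restrict_perm P C ` T"
  define T'' where "T'' = {a\<in>T. restrict_perm P C a \<in> T'}"
  have T''_inv: "invariant_subgroup (Sym P) Ker T''"
    unfolding T''_def using restrict_preimage_invariant[OF C T_inv TS T'(1)] .
  obtain t where t: "t \<in> T'" "t \<noteq> \<one>\<^bsub>Sym P\<^esub>" using T'(2) Sym.invariant_subgroupD(3)[OF T'(1)] by blast
  then obtain a where a: "a \<in> T" "t = restrict_perm P C a" using T'(3) by blast
  have "a \<noteq> \<one>\<^bsub>Sym P\<^esub>" using a(2) t(2) restrict_perm_one[OF class_subset[OF C]] by blast
  then have "T'' \<noteq> {\<one>\<^bsub>Sym P\<^esub>}" using a t unfolding T''_def by blast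
  then have "T'' = T" using T T''_inv unfolding minimal_invariant_def T''_def by blast
  then show "T' = restrict_perm P C ` T" using T'(3) unfolding T''_def by blast
qed

lemma restrict_socle_mem:
  assumes s: "s \<in> Soc" and C: "C \<in> CC"
  shows "restrict_perm P C s \<in> invariant_socle (Sym P) Ker socle_product"
proof -
  let ?S = "invariant_socle (Sym P) Ker socle_product"
  have S_sub: "subgroup ?S (Sym P)"
    using Sym.invariant_socle_invariant[of Ker socle_product] kernel_carrier
      subgroup.subset[OF socle_product_subgroup] Sym.invariant_subgroupD(1) by blast
  have gen: "restrict_perm P C h \<in> ?S" if "h \<in> T" "minimal_invariant (Sym P) Ker Ker T" for h T
  proof (cases "restrict_perm P C ` T = {\<one>\<^bsub>Sym P\<^esub>}")
    case True
    then show ?thesis using imageI[OF that(1), of "restrict_perm P C"] subgroup.one_closed[OF S_sub] by simp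
  next
    case False
    then show ?thesis
      using Sym.minimal_invariant_subset_socle[OF restrict_minimal_invariant[OF that(2) C]] that(1) by blast
  qed
  have Soc_Stab: "h \<in> Stab" if "h \<in> Soc" for h using that socle_subset_Stab by blast
  from s show ?thesis
    unfolding invariant_socle_def[of _ Ker Ker]
  proof (induct s rule: generate.induct)
    case one
    then show ?case using restrict_perm_one[OF class_subset[OF C]] subgroup.one_closed[OF S_sub] by simp
  next
    case (incl h)
    then show ?case using gen by blast
  next
    case (inv h)
    then obtain T where T: "minimal_invariant (Sym P) Ker Ker T" "h \<in> T" by blast
    then have "inv\<^bsub>Sym P\<^esub> h \<in> T"
      using subgroup.m_inv_closed[OF Sym.invariant_subgroupD(1)[OF Sym.minimal_invariantD(1)[OF T(1)]]] by blast
    then show ?case using gen T(1) by blast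
  next
    case (eng h1 h2)
    have "h1 \<in> Stab" "h2 \<in> Stab" using eng(1,3) Soc_Stab unfolding invariant_socle_def by blast+
    then have "restrict_perm P C (h1 \<otimes>\<^bsub>Sym P\<^esub> h2) = restrict_perm P C h1 \<otimes>\<^bsub>Sym P\<^esub> restrict_perm P C h2"
      using restrict_perm_mult[OF class_subset[OF C]] StabD C by metis
    then show ?case using subgroup.m_closed[OF S_sub eng(2,4)] by simp
  qed
qed

lemma socle_product_subset_socle: "socle_product \<subseteq> invariant_socle (Sym P) Ker socle_product"
proof
  fix f assume f: "f \<in> socle_product"
  have S_sub: "subgroup (invariant_socle (Sym P) Ker socle_product) (Sym P)"
    using Sym.invariant_socle_invariant[of Ker socle_product] kernel_carrier
      subgroup.subset[OF socle_product_subgroup] Sym.invariant_subgroupD(1) by blast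
  show "f \<in> invariant_socle (Sym P) Ker socle_product"
  proof (rule mem_subgroup_if_restrictions_mem[OF S_sub socle_productD(1)[OF f]])
    fix C assume C: "C \<in> CC"
    then obtain s where "s \<in> Soc" "restrict_perm P C f = restrict_perm P C s" using socle_productD(2)[OF f] by blast
    then show "restrict_perm P C f \<in> invariant_socle (Sym P) Ker socle_product"
      using restrict_socle_mem[OF _ C] by simp
  qed
qed

text \<open>The classwise product of an abelian socle is generated by minimal normal subgroups of the
  kernel, so by complete reducibility so is every normal subgroup of the kernel inside it.\<close>

lemma subset_socle_if_classwise_in_socle:
  assumes Soc_comm: "\<And>a b. a \<in> Soc \<Longrightarrow> b \<in> Soc \<Longrightarrow> a \<otimes>\<^bsub>Sym P\<^esub> b = b \<otimes>\<^bsub>Sym P\<^esub> a"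
    and W: "invariant_subgroup (Sym P) Ker W" and WK: "W \<subseteq> Ker"
    and agree: "\<And>w C. w \<in> W \<Longrightarrow> C \<in> CC \<Longrightarrow> \<exists>s\<in>Soc. \<forall>x\<in>C. w x = s x"
  shows "W \<subseteq> Soc"
proof -
  have "w \<in> socle_product" if w: "w \<in> W" for w
    unfolding socle_product_def
  proof (intro CollectI conjI ballI)
    show "w \<in> Stab" using w WK kernel_subset_Stab by blast
    fix C assume C: "C \<in> CC"
    obtain s where "s \<in> Soc" "\<forall>x\<in>C. w x = s x" using agree[OF w C] by blast
    then show "\<exists>s\<in>Soc. restrict_perm P C w = restrict_perm P C s" using restrict_perm_cong[of C w s] by blast
  qed
  moreover have "Ker \<subseteq> carrier (Sym P)" using kernel_carrier by blast
  ultimately have "W \<subseteq> invariant_socle (Sym P) Ker W"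
    using Sym.subset_invariant_socle_if_completely_reducible[OF finite_BijGroup[OF finite_points] _
        socle_product_invariant socle_product_comm[OF Soc_comm] socle_product_subset_socle W]
    by blast
  also have "\<dots> \<subseteq> Soc" using Sym.invariant_socle_mono[OF WK] .
  finally show ?thesis .
qed

lemma centraliser_Int_kernel: "centraliser P G H \<inter> Ker = {a\<in>Ker. \<forall>h\<in>H. a \<otimes>\<^bsub>Sym P\<^esub> h = h \<otimes>\<^bsub>Sym P\<^esub> a}"
  unfolding centraliser_def using kernel_subset by blast

lemma centraliser_kernel_invariant:
  "invariant_subgroup (Sym P) G H \<Longrightarrow> invariant_subgroup (Sym P) G (centraliser P G H \<inter> Ker)"
  unfolding centraliser_Int_kernel using Sym.centraliser_invariant[OF subgroup_G kernel_invariant] .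

lemma kernel_centraliser_cases:
  "centraliser P G Ker \<inter> Ker = {\<one>\<^bsub>Sym P\<^esub>}
   \<or> (centraliser P G Ker \<inter> Ker = Ker \<and> Ker = Soc \<and> elementary_abelian P Soc)"
proof -
  define Z where "Z = centraliser P G Ker \<inter> Ker"
  have Z_inv: "invariant_subgroup (Sym P) G Z"
    unfolding Z_def using centraliser_kernel_invariant[OF kernel_invariant] .
  have Z_char: "Z = {a\<in>Ker. \<forall>h\<in>Ker. a \<otimes>\<^bsub>Sym P\<^esub> h = h \<otimes>\<^bsub>Sym P\<^esub> a}"
    unfolding Z_def centraliser_Int_kernel ..
  have ZK: "Z \<subseteq> Ker" unfolding Z_char by blast
  show ?thesis
  proof (cases "Z = {\<one>\<^bsub>Sym P\<^esub>}")
    case True then show ?thesis unfolding Z_def by blast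
  next
    case False
    have Z_trans: "\<forall>C\<in>CC. \<forall>x\<in>C. \<forall>y\<in>C. \<exists>h\<in>Z. h x = y"
      using normal_in_kernel_trivial_or_transitive[OF Z_inv ZK] False by blast
    have Z_comm: "a \<otimes>\<^bsub>Sym P\<^esub> b = b \<otimes>\<^bsub>Sym P\<^esub> a" if "a \<in> Z" "b \<in> Z" for a b
      using that ZK unfolding Z_char by blast
    have agree: "\<exists>z\<in>Z. \<forall>x\<in>C. k x = z x" if k: "k \<in> Ker" and C: "C \<in> CC" for k C
    proof (rule agrees_with_transitive_abelian[OF ZK Z_comm C _ k])
      show "\<exists>a\<in>Z. a x = y" if "x \<in> C" "y \<in> C" for x y using Z_trans C that by blast
      fix a assume "a \<in> Z"
      then have "a \<otimes>\<^bsub>Sym P\<^esub> k = k \<otimes>\<^bsub>Sym P\<^esub> a" using k unfolding Z_char by blast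
      then show "k \<otimes>\<^bsub>Sym P\<^esub> a = a \<otimes>\<^bsub>Sym P\<^esub> k" by simp
    qed
    have K_comm: "a \<otimes>\<^bsub>Sym P\<^esub> b = b \<otimes>\<^bsub>Sym P\<^esub> a" if "a \<in> Ker" "b \<in> Ker" for a b
      using abelian_if_classwise_abelian[OF subset_refl ZK Z_comm agree that] .
    then have ZK_eq: "Z = Ker" unfolding Z_char by auto
    obtain p where p: "Factorial_Ring.prime (p::nat)" "\<forall>x\<in>Ker. x [^]\<^bsub>Sym P\<^esub> p = \<one>\<^bsub>Sym P\<^esub>"
      using abelian_invariant_prime_exponent[OF kernel_invariant subset_refl K_comm kernel_nontrivial] by blast
    have "Ker \<subseteq> Soc"
      using Sym.subset_invariant_socle_if_prime_exponent[OF finite_BijGroup[OF finite_points]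
          kernel_subgroup K_comm p] .
    then have KS: "Ker = Soc" using socle_subset_kernel by blast
    have "elementary_abelian P Soc"
      unfolding elementary_abelian_def abelian_set_def using K_comm p KS by blast
    then show ?thesis using ZK_eq KS unfolding Z_def by blast
  qed
qed

text \<open>If the centraliser W of the socle in the kernel is nontrivial, then \<open>Soc \<inter> W\<close> is a
  nontrivial abelian normal subgroup of G inside the kernel, hence transitive on each class.\<close>

lemma agrees_with_socle_centre:
  assumes W: "centraliser P G Soc \<inter> Ker \<noteq> {\<one>\<^bsub>Sym P\<^esub>}"
    and f: "f \<in> Ker" and f_comm: "\<And>z. z \<in> Soc \<inter> centraliser P G Soc \<Longrightarrow> f \<otimes>\<^bsub>Sym P\<^esub> z = z \<otimes>\<^bsub>Sym P\<^esub> f"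
    and C: "C \<in> CC"
  shows "\<exists>z\<in>Soc \<inter> centraliser P G Soc. \<forall>x\<in>C. f x = z x"
proof -
  define Z where "Z = Soc \<inter> (centraliser P G Soc \<inter> Ker)"
  have Z_eq: "Z = Soc \<inter> centraliser P G Soc" unfolding Z_def using socle_subset_kernel by blast
  have W_inv: "invariant_subgroup (Sym P) G (centraliser P G Soc \<inter> Ker)"
    using centraliser_kernel_invariant[OF socle_invariant] .
  have Z_inv: "invariant_subgroup (Sym P) G Z"
    unfolding Z_def using Sym.invariant_subgroup_Int[OF socle_invariant W_inv] .
  have ZK: "Z \<subseteq> Ker" unfolding Z_def using socle_subset_kernel by blast
  obtain T where T: "minimal_invariant (Sym P) Ker (centraliser P G Soc \<inter> Ker) T"
    using Sym.minimal_invariant_exists[OF finite_BijGroup[OF finite_points]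
        invariant_subgroup_kernel[OF W_inv] W] by blast
  obtain t where t: "t \<in> T" "t \<noteq> \<one>\<^bsub>Sym P\<^esub>" using Sym.minimal_invariantD(3)[OF T] by blast
  have "t \<in> Soc"
    using Sym.minimal_invariant_subset_socle[OF Sym.minimal_invariant_mono[OF T]] t(1) by blast
  then have "t \<in> Z" unfolding Z_def using t(1) Sym.minimal_invariantD(2)[OF T] by blast
  then have Z_trans: "\<forall>C\<in>CC. \<forall>x\<in>C. \<forall>y\<in>C. \<exists>h\<in>Z. h x = y"
    using normal_in_kernel_trivial_or_transitive[OF Z_inv ZK] t(2) by blast
  have Z_comm: "a \<otimes>\<^bsub>Sym P\<^esub> b = b \<otimes>\<^bsub>Sym P\<^esub> a" if "a \<in> Z" "b \<in> Z" for a b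
    using that unfolding Z_def centraliser_def by blast
  show ?thesis
    using agrees_with_transitive_abelian[OF ZK Z_comm C _ f] f_comm Z_trans C unfolding Z_eq by blast
qed

lemma socle_centraliser_cases:
  "(centraliser P G Soc \<inter> Ker = {\<one>\<^bsub>Sym P\<^esub>} \<and> \<not> abelian_set P Soc)
   \<or> (centraliser P G Soc \<inter> Ker = Soc \<and> elementary_abelian P Soc)"
proof -
  define W where "W = centraliser P G Soc \<inter> Ker"
  define Z where "Z = Soc \<inter> centraliser P G Soc"
  have W_inv: "invariant_subgroup (Sym P) G W"
    unfolding W_def using centraliser_kernel_invariant[OF socle_invariant] .
  have W_char: "W = {a\<in>Ker. \<forall>h\<in>Soc. a \<otimes>\<^bsub>Sym P\<^esub> h = h \<otimes>\<^bsub>Sym P\<^esub> a}"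
    unfolding W_def centraliser_Int_kernel ..
  have WK: "W \<subseteq> Ker" and SK: "Soc \<subseteq> Ker" and ZK: "Z \<subseteq> Ker"
    unfolding W_char Z_def using socle_subset_kernel by blast+
  have Soc_in_W: "Soc \<subseteq> W" if "abelian_set P Soc"
    using that SK unfolding W_char abelian_set_def by blast
  show ?thesis
  proof (cases "W = {\<one>\<^bsub>Sym P\<^esub>}")
    case True
    then have "\<not> abelian_set P Soc"
      using Soc_in_W socle_nontrivial Sym.invariant_subgroupD(3)[OF socle_invariant] by blast
    then show ?thesis using True unfolding W_def by blast
  next
    case False
    note agree = agrees_with_socle_centre[OF False[unfolded W_def]]
    have Z_comm: "a \<otimes>\<^bsub>Sym P\<^esub> b = b \<otimes>\<^bsub>Sym P\<^esub> a" if "a \<in> Z" "b \<in> Z" for a b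
      using that unfolding Z_def centraliser_def by blast
    have Soc_agree: "\<exists>z\<in>Z. \<forall>x\<in>C. s x = z x" if s: "s \<in> Soc" and C: "C \<in> CC" for s C
      using agree[OF _ _ C, of s] s SK unfolding Z_def centraliser_def by fastforce
    have W_agree: "\<exists>z\<in>Z. \<forall>x\<in>C. w x = z x" if w: "w \<in> W" and C: "C \<in> CC" for w C
      using agree[OF _ _ C, of w] w unfolding Z_def W_char by blast
    have Soc_comm: "a \<otimes>\<^bsub>Sym P\<^esub> b = b \<otimes>\<^bsub>Sym P\<^esub> a" if "a \<in> Soc" "b \<in> Soc" for a b
      using abelian_if_classwise_abelian[OF SK ZK Z_comm Soc_agree that] .
    have W_comm: "a \<otimes>\<^bsub>Sym P\<^esub> b = b \<otimes>\<^bsub>Sym P\<^esub> a" if "a \<in> W" "b \<in> W" for a b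
      using abelian_if_classwise_abelian[OF WK ZK Z_comm W_agree that] .
    have "W \<subseteq> Soc"
      using subset_socle_if_classwise_in_socle[OF Soc_comm invariant_subgroup_kernel[OF W_inv] WK]
        W_agree unfolding Z_def by blast
    moreover have "Soc \<subseteq> W" using Soc_in_W Soc_comm unfolding abelian_set_def by blast
    ultimately have WS: "W = Soc" by blast
    obtain p where p: "Factorial_Ring.prime (p::nat)" "\<forall>x\<in>W. x [^]\<^bsub>Sym P\<^esub> p = \<one>\<^bsub>Sym P\<^esub>"
      using abelian_invariant_prime_exponent[OF W_inv WK W_comm False] by blast
    have "elementary_abelian P Soc"
      unfolding elementary_abelian_def abelian_set_def using Soc_comm p WS by blast
    then show ?thesis using WS unfolding W_def by blast
  qed
qed

lemma normal_Int_kernel_trivial: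
  assumes N: "invariant_subgroup (Sym P) G N" and NS: "N \<inter> Soc = {\<one>\<^bsub>Sym P\<^esub>}"
  shows "N \<inter> Ker = {\<one>\<^bsub>Sym P\<^esub>}"
proof (rule ccontr)
  assume "N \<inter> Ker \<noteq> {\<one>\<^bsub>Sym P\<^esub>}"
  then obtain T where T: "minimal_invariant (Sym P) Ker (N \<inter> Ker) T"
    using Sym.minimal_invariant_exists[OF finite_BijGroup[OF finite_points]
        Sym.invariant_subgroup_Int[OF invariant_subgroup_kernel[OF N] kernel_invariant_kernel]] by blast
  have "T \<subseteq> Soc" using Sym.minimal_invariant_subset_socle[OF Sym.minimal_invariant_mono[OF T]] by blast
  then have "T \<subseteq> {\<one>\<^bsub>Sym P\<^esub>}" using NS Sym.minimal_invariantD(2)[OF T] by blast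
  then show False using Sym.minimal_invariantD(3)[OF T] by blast
qed

lemma subset_kernel_if_orbits_eq_classes:
  assumes H: "subgroup H (Sym P)" "H \<subseteq> G" and orbits: "perm_orbit H ` P = CC"
  shows "H \<subseteq> Ker"
proof
  fix h assume h: "h \<in> H"
  show "h \<in> Ker"
  proof (rule kernel_memI)
    show "h \<in> G" using h H(2) by blast
    fix C z assume C: "C \<in> CC" and z: "z \<in> C"
    have zP: "z \<in> P" using class_subset[OF C] z by blast
    have "perm_orbit H z = C"
      using class_unique[of "perm_orbit H z" C z] orbits zP C z perm_orbit_self[OF H(1) zP] by blast
    then show "h z \<in> C" using h unfolding perm_orbit_def by blast
  qed
qed

lemma kernel_normal_product_transitive:
  assumes max: "maximal_partition P G CC"
    and N: "invariant_subgroup (Sym P) G N" "N \<subseteq> G" and NK: "N \<inter> Ker = {\<one>\<^bsub>Sym P\<^esub>}" "\<not> N \<subseteq> Ker"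
  shows "perm_orbit (Ker <#>\<^bsub>Sym P\<^esub> N) ` P = {P}"
proof -
  note N' = Sym.invariant_subgroupD[OF N(1)] and K' = Sym.invariant_subgroupD[OF kernel_invariant]
  define H where "H = Ker <#>\<^bsub>Sym P\<^esub> N"
  have KN_comm: "k \<otimes>\<^bsub>Sym P\<^esub> n = n \<otimes>\<^bsub>Sym P\<^esub> k" if "k \<in> Ker" "n \<in> N" for k n
    using Sym.invariant_subgroups_commute[OF kernel_invariant kernel_subset N] NK(1) that by blast
  have H_inv: "invariant_subgroup (Sym P) G H"
    unfolding H_def using Sym.commuting_set_mult_invariant[OF kernel_invariant N(1) _ KN_comm] G_carrier
    by blast
  have KH: "Ker \<subseteq> H" unfolding H_def using Sym.subset_set_mult_left[OF N'(3) K'(2)] .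
  have "refines CC (perm_orbit H ` P)"
    unfolding refines_def
  proof
    fix D assume D: "D \<in> CC"
    obtain z where z: "z \<in> D" using class_nonempty[OF D] by blast
    have "D \<subseteq> perm_orbit H z"
      using kernel_transitive[OF D z] KH unfolding perm_orbit_def by blast
    then show "\<exists>B\<in>perm_orbit H ` P. D \<subseteq> B" using class_subset[OF D] z by blast
  qed
  moreover have "perm_orbit H ` P \<noteq> CC"
  proof
    assume orbits: "perm_orbit H ` P = CC"
    have "H \<subseteq> G"
    proof
      fix u assume "u \<in> H"
      then obtain k n where "k \<in> Ker" "n \<in> N" "u = k \<otimes>\<^bsub>Sym P\<^esub> n"
        unfolding H_def by (rule Sym.set_mult_memE)
      then show "u \<in> G" using subgroup.m_closed[OF subgroup_G] kernel_subset N(2) by blast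
    qed
    then have "H \<subseteq> Ker"
      using subset_kernel_if_orbits_eq_classes[OF Sym.invariant_subgroupD(1)[OF H_inv] _ orbits] by blast
    then show False using Sym.subset_set_mult_right[OF K'(3) N'(2)] NK(2) unfolding H_def by blast
  qed
  ultimately show ?thesis
    unfolding H_def[symmetric] using coarsening_eq_CC[OF max perm_orbits_invariant[OF H_inv]] by blast
qed

lemma normal_meets_every_class:
  assumes max: "maximal_partition P G CC"
    and N: "invariant_subgroup (Sym P) G N" "N \<subseteq> G" and NK: "N \<inter> Ker = {\<one>\<^bsub>Sym P\<^esub>}" "\<not> N \<subseteq> Ker"
    and x: "x \<in> P" and C: "C \<in> CC"
  shows "\<exists>n\<in>N. n x \<in> C"
proof -
  obtain y where y: "y \<in> C" "y \<in> perm_orbit (Ker <#>\<^bsub>Sym P\<^esub> N) x"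
    using kernel_normal_product_transitive[OF max N NK] x class_nonempty[OF C] class_subset[OF C] by blast
  then obtain k n where kn: "k \<in> Ker" "n \<in> N" "y = (k \<otimes>\<^bsub>Sym P\<^esub> n) x"
    unfolding perm_orbit_def by (blast elim: Sym.set_mult_memE)
  have nc: "n \<in> carrier (Sym P)" using kn(2) Sym.invariant_subgroupD(2)[OF N(1)] by blast
  have "k (n x) \<in> C" using BijGroup_mult_apply[OF kernel_carrier[OF kn(1)] nc x] kn(3) y(1) by simp
  then have "n x \<in> C" using kernel_apply_inv[OF kn(1) C BijGroup_closed[OF nc x]] by blast
  then show ?thesis using kn(2) by blast
qed

lemma class_orbit_meets_partition:
  assumes N: "subgroup N (Sym P)"
  shows "is_partition P {C \<inter> perm_orbit N x | C x. C \<in> CC \<and> x \<in> C}"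
    (is "is_partition P ?M")
  unfolding is_partition_def
proof (intro conjI ballI impI)
  fix A assume "A \<in> ?M"
  then obtain C x where "C \<in> CC" "x \<in> C" "A = C \<inter> perm_orbit N x" by blast
  then show "A \<noteq> {}" using perm_orbit_self[OF N] class_subset by blast
next
  show "\<Union>?M = P"
  proof
    show "\<Union>?M \<subseteq> P" using class_subset by blast
    show "P \<subseteq> \<Union>?M"
    proof
      fix x assume x: "x \<in> P"
      obtain C where C: "C \<in> CC" "x \<in> C" using class_exists[OF x] by blast
      then have "x \<in> C \<inter> perm_orbit N x" using perm_orbit_self[OF N x] by blast
      then show "x \<in> \<Union>?M" using C by blast
    qed
  qed
next
  fix A B assume "A \<in> ?M" "B \<in> ?M" "A \<noteq> B"
  then obtain C x D y where A: "C \<in> CC" "x \<in> C" "A = C \<inter> perm_orbit N x"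
    and B: "D \<in> CC" "y \<in> D" "B = D \<inter> perm_orbit N y" and AB: "A \<noteq> B" by blast
  show "A \<inter> B = {}"
  proof (rule ccontr)
    assume "A \<inter> B \<noteq> {}"
    then obtain z where z: "z \<in> C" "z \<in> D" "z \<in> perm_orbit N x" "z \<in> perm_orbit N y" using A B by blast
    have "x \<in> P" "y \<in> P" using A B class_subset by blast+
    then have "perm_orbit N x = perm_orbit N y" using perm_orbit_eq[OF N] z(3,4) by metis
    moreover have "C = D" using class_unique[OF A(1) B(1) z(1,2)] .
    ultimately show False using AB A(3) B(3) by simp
  qed
qed

lemma class_orbit_meets_invariant:
  assumes N: "invariant_subgroup (Sym P) G N"
  shows "invariant_partition P G {C \<inter> perm_orbit N x | C x. C \<in> CC \<and> x \<in> C}"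
    (is "invariant_partition P G ?M")
  unfolding invariant_partition_def
proof (intro conjI ballI)
  note N_sub = Sym.invariant_subgroupD(1)[OF N]
  show "is_partition P ?M"
    using class_orbit_meets_partition[OF N_sub] .
  fix g A assume g: "g \<in> G" and "A \<in> ?M"
  then obtain C x where A: "C \<in> CC" "x \<in> C" "A = C \<inter> perm_orbit N x" by blast
  have xP: "x \<in> P" using A class_subset by blast
  have "inj_on g P" using G_carrier[OF g] unfolding BijGroup_def Bij_def bij_betw_def by simp
  then have "g ` A = g ` C \<inter> g ` perm_orbit N x"
    using inj_on_image_Int[OF _ class_subset[OF A(1)] perm_orbit_subset[OF N_sub xP]] A(3) by simp
  also have "\<dots> = g ` C \<inter> perm_orbit N (g x)" using perm_orbit_conj[OF N g xP] by simp
  finally show "g ` A \<in> ?M" using image_class[OF g A(1)] A(2) by blast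
qed

lemma normal_orbit_meets_class_once:
  assumes max: "maximal_partition P G CC"
    and N: "invariant_subgroup (Sym P) G N" "N \<subseteq> G" "\<not> N \<subseteq> Ker" "\<not> transitive_on N P"
    and C: "C \<in> CC" and x: "x \<in> C"
  shows "C \<inter> perm_orbit N x = {x}"
proof -
  note N_sub = Sym.invariant_subgroupD(1)[OF N(1)]
  let ?M = "{C \<inter> perm_orbit N x | C x. C \<in> CC \<and> x \<in> C}"
  have M_discrete: "?M = (\<lambda>x. {x}) ` P"
  proof (rule ccontr)
    assume "?M \<noteq> (\<lambda>x. {x}) ` P"
    moreover have "refines ?M CC" unfolding refines_def by blast
    ultimately have M_CC: "?M = CC" by (rule refinement_eq_CC[OF class_orbit_meets_invariant[OF N(1)], rotated])
    have "refines CC (perm_orbit N ` P)"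
      unfolding refines_def
    proof
      fix D assume D: "D \<in> CC"
      obtain z where z: "z \<in> D" using class_nonempty[OF D] by blast
      have zP: "z \<in> P" using class_subset[OF D] z by blast
      have "D \<inter> perm_orbit N z \<in> ?M" using D z by blast
      then have "D \<inter> perm_orbit N z \<in> CC" unfolding M_CC .
      then have "D \<inter> perm_orbit N z = D"
        using class_unique[of "D \<inter> perm_orbit N z" D z] D z perm_orbit_self[OF N_sub zP] by blast
      then show "\<exists>B\<in>perm_orbit N ` P. D \<subseteq> B" using zP by blast
    qed
    moreover have "perm_orbit N ` P \<noteq> {P}" using perm_orbits_single_imp_transitive[OF N_sub] N(4) by blast
    ultimately have "perm_orbit N ` P = CC" by (rule coarsening_eq_CC[OF max perm_orbits_invariant[OF N(1)]])
    then show False using subset_kernel_if_orbits_eq_classes[OF N_sub N(2)] N(3) by blast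
  qed
  have "C \<inter> perm_orbit N x \<in> ?M" using C x by blast
  then have "C \<inter> perm_orbit N x \<in> (\<lambda>x. {x}) ` P" unfolding M_discrete .
  then obtain y where y: "C \<inter> perm_orbit N x = {y}" by blast
  moreover have "x \<in> C \<inter> perm_orbit N x" using x perm_orbit_self[OF N_sub] class_subset[OF C] by blast
  ultimately show ?thesis by simp
qed

context
  fixes N :: "('a \<Rightarrow> 'a) set"
  assumes max: "maximal_partition P G CC"
    and N_inv: "invariant_subgroup (Sym P) G N" and N_G: "N \<subseteq> G"
    and N_nontrivial: "N \<noteq> {\<one>\<^bsub>Sym P\<^esub>}" and N_intransitive: "\<not> transitive_on N P"
    and N_Soc: "N \<inter> Soc = {\<one>\<^bsub>Sym P\<^esub>}"
begin

lemma normal_not_in_kernel: "\<not> N \<subseteq> Ker"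
  using normal_Int_kernel_trivial[OF N_inv N_Soc] N_nontrivial by blast

lemma normal_orbit_meets_class:
  assumes C: "C \<in> CC" and y: "y \<in> P"
  shows "\<exists>x\<in>C. perm_orbit N y = perm_orbit N x"
proof -
  note N_sub = Sym.invariant_subgroupD(1)[OF N_inv]
  obtain n where n: "n \<in> N" "n y \<in> C"
    using normal_meets_every_class[OF max N_inv N_G normal_Int_kernel_trivial[OF N_inv N_Soc]
        normal_not_in_kernel y C] by blast
  have "n y \<in> perm_orbit N y" unfolding perm_orbit_def using n(1) by blast
  then show ?thesis using perm_orbit_eq[OF N_sub y] n(2) by metis
qed

lemma class_Int_normal_orbit: "C \<in> CC \<Longrightarrow> x \<in> C \<Longrightarrow> C \<inter> perm_orbit N x = {x}"
  using normal_orbit_meets_class_once[OF max N_inv N_G normal_not_in_kernel N_intransitive] .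

lemma card_class_Int_normal_orbit:
  assumes C: "C \<in> CC" and A: "A \<in> perm_orbit N ` P"
  shows "card (C \<inter> A) = 1"
proof -
  obtain y where y: "y \<in> P" "A = perm_orbit N y" using A by blast
  obtain x where "x \<in> C" "perm_orbit N y = perm_orbit N x" using normal_orbit_meets_class[OF C y(1)] by blast
  then show ?thesis using class_Int_normal_orbit[OF C] y(2) by simp
qed

lemma card_normal_orbits:
  assumes C: "C \<in> CC"
  shows "card (perm_orbit N ` P) = card C"
proof -
  note N_sub = Sym.invariant_subgroupD(1)[OF N_inv]
  have "inj_on (perm_orbit N) C"
  proof (rule inj_onI)
    fix x x' assume x: "x \<in> C" and x': "x' \<in> C" and eq: "perm_orbit N x = perm_orbit N x'"
    have "x' \<in> P" using class_subset[OF C] x' by blast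
    then have "x' \<in> C \<inter> perm_orbit N x" using x' eq perm_orbit_self[OF N_sub] by blast
    then show "x = x'" using class_Int_normal_orbit[OF C x] by simp
  qed
  moreover have "perm_orbit N ` C = perm_orbit N ` P"
    using normal_orbit_meets_class[OF C] class_subset[OF C] by blast
  ultimately have "bij_betw (perm_orbit N) C (perm_orbit N ` P)" unfolding bij_betw_def by blast
  then show ?thesis by (simp add: bij_betw_same_card)
qed

lemma card_normal_orbit:
  assumes A: "A \<in> perm_orbit N ` P"
  shows "card A = card CC"
proof -
  note N_sub = Sym.invariant_subgroupD(1)[OF N_inv]
  obtain y where y: "y \<in> P" "A = perm_orbit N y" using A by blast
  have AP: "A \<subseteq> P" using perm_orbit_subset[OF N_sub y(1)] y(2) by simp
  have A_eq: "perm_orbit N z = A" if "z \<in> A" for z using perm_orbit_eq[OF N_sub y(1)] that y(2) by simp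
  define cls where "cls z = (SOME C. C \<in> CC \<and> z \<in> C)" for z
  have cls: "cls z \<in> CC" "z \<in> cls z" if "z \<in> P" for z
  proof -
    have "\<exists>C. C \<in> CC \<and> z \<in> C" using class_exists[OF that] by blast
    then show "cls z \<in> CC" "z \<in> cls z" unfolding cls_def using someI_ex by (metis (mono_tags, lifting))+
  qed
  have "inj_on cls A"
  proof (rule inj_onI)
    fix z z' assume z: "z \<in> A" and z': "z' \<in> A" and eq: "cls z = cls z'"
    have "z' \<in> cls z \<inter> perm_orbit N z" using cls(2)[of z'] z' AP eq A_eq[OF z] by auto
    moreover have "z \<in> P" using z AP by blast
    ultimately show "z = z'" using class_Int_normal_orbit[OF cls[of z]] by simp
  qed
  moreover have "cls ` A = CC"
  proof
    show "cls ` A \<subseteq> CC" using cls(1) AP by blast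
    show "CC \<subseteq> cls ` A"
    proof
      fix C assume C: "C \<in> CC"
      obtain x where x: "x \<in> C" "perm_orbit N y = perm_orbit N x" using normal_orbit_meets_class[OF C y(1)] by blast
      have xP: "x \<in> P" using class_subset[OF C] x(1) by blast
      have "x \<in> A" using y(2) x(2) perm_orbit_self[OF N_sub xP] by simp
      moreover have "cls x = C" using class_unique[OF cls(1)[OF xP] C cls(2)[OF xP] x(1)] .
      ultimately show "C \<in> cls ` A" by blast
    qed
  qed
  ultimately have "bij_betw cls A CC" unfolding bij_betw_def by blast
  then show ?thesis by (simp add: bij_betw_same_card)
qed

lemma complementary_partition:
  "\<exists>D. normal_partition P G D \<and> (\<forall>C\<in>CC. card D = card C) \<and> (\<forall>A\<in>D. card A = card CC)
     \<and> (\<forall>C\<in>CC. \<forall>A\<in>D. card (C \<inter> A) = 1)"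
  using perm_orbits_normal[OF N_inv N_G] card_normal_orbits card_normal_orbit card_class_Int_normal_orbit
  by blast

end

end

theorem lemma8p2:
  fixes P :: "'a set" and L :: "'a set set" and G :: "('a \<Rightarrow> 'a) set"
    and \<C> :: "'a set set" and v k c d :: nat
  assumes lin: "linear_space P L"
    and v: "card P = v"
    and k: "\<forall>l\<in>L. card l = k"
    and kv: "2 < k" "k < v"
    and aut: "aut_group P L G"
    and lt: "line_transitive L G"
    and nt: "nontrivial_partition P \<C>"
    and inv: "invariant_partition P G \<C>"
    and dC: "card \<C> = d"
    and cC: "\<forall>XK\<in>\<C>. card XK = c"
    and norm: "normal_partition P G \<C>"
    and mini: "minimal_partition P G \<C>"
  defines "K \<equiv> kernel_on G \<C>"
    and "S \<equiv> socle P (kernel_on G \<C>)"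
    and "XK \<equiv> centraliser P G (kernel_on G \<C>)"
    and "YS \<equiv> centraliser P G (socle P (kernel_on G \<C>))"
  shows "((YS \<inter> K = {\<one>\<^bsub>Sym P\<^esub>} \<and> \<not> abelian_set P S)
            \<or> (YS \<inter> K = S \<and> elementary_abelian P S))
       \<and> (XK \<inter> K = {\<one>\<^bsub>Sym P\<^esub>} \<or> (XK \<inter> K = K \<and> K = S \<and> elementary_abelian P S))
       \<and> ((maximal_partition P G \<C> \<and>
            (\<exists>N. N \<lhd> subgrp P G \<and> N \<noteq> {\<one>\<^bsub>Sym P\<^esub>} \<and> \<not> transitive_on N P
                 \<and> N \<inter> S = {\<one>\<^bsub>Sym P\<^esub>}))
          \<longrightarrow> (\<exists>\<C>'. normal_partition P G \<C>' \<and> card \<C>' = c \<and> (\<forall>A'\<in>\<C>'. card A' = d)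
                  \<and> (\<forall>C\<in>\<C>. \<forall>C'\<in>\<C>'. card (C \<inter> C') = 1)))"
proof -
  have "finite P" using lin unfolding linear_space_def by blast
  moreover have "subgroup G (Sym P)" using aut unfolding aut_group_def by blast
  ultimately interpret minimal_normal_block_system P G \<C>
    using inv nt norm mini
    by (simp add: minimal_normal_block_system_def minimal_normal_block_system_axioms_def
        block_system_def block_system_axioms_def perm_group_def)
  have socle: "socle P Ker = Soc" using socle_eq_invariant_socle[OF kernel_subgroup] .
  have "\<exists>\<C>'. normal_partition P G \<C>' \<and> card \<C>' = c \<and> (\<forall>A'\<in>\<C>'. card A' = d)
          \<and> (\<forall>C\<in>\<C>. \<forall>C'\<in>\<C>'. card (C \<inter> C') = 1)"
    if max: "maximal_partition P G \<C>" and N: "N \<lhd> subgrp P G" "N \<noteq> {\<one>\<^bsub>Sym P\<^esub>}"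
      "\<not> transitive_on N P" "N \<inter> Soc = {\<one>\<^bsub>Sym P\<^esub>}" for N
  proof -
    obtain D where D: "normal_partition P G D" "\<forall>C\<in>\<C>. card D = card C" "\<forall>A\<in>D. card A = card \<C>"
      "\<forall>C\<in>\<C>. \<forall>A\<in>D. card (C \<inter> A) = 1"
      using complementary_partition[OF max _ _ N(2-4)] Sym.normal_restrict_iff[OF subgroup_G] N(1)
      by blast
    obtain C0 where "C0 \<in> \<C>" using class_with_two_points by blast
    then show ?thesis using D cC dC by metis
  qed
  then show ?thesis
    unfolding K_def S_def XK_def YS_def socle
    using socle_centraliser_cases kernel_centraliser_cases by blast
qed

end
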